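(* Under the standing setting, assume the Poincaré inequality: there is $C>0$ such that $\|u-\overline{u}\|_{L^2(\Omega,\nu)}\le C|Du|_\nu(\Omega)$ for all $u\in BV(\Omega,d,\nu)\cap L^2(\Omega,\nu)$, where $\overline{u}=\nu(\Omega)^{-1}\int_\Omega u\,d\nu$. Let $u_0\in L^2(\Omega,\nu)$ and let $u$ be the weak solution of the Neumann problem with initial datum $u_0$. Then the extinction time $T_{ex}(u_0):=\inf\{T>0: u(t)=\overline{u_0}\ \text{for all } t\ge T\}$ satisfies $$T_{ex}(u_0)\le\frac{\|u_0\|_{L^2(\Omega,\nu)}}{\lambda_1(\mathcal{TV}_N)},\qquad \lambda_1(\mathcal{TV}_N):=\inf\Big\{\frac{\mathcal{TV}_N(u)}{\|u\|_{L^2(\Omega,\nu)}}: u\in L^2(\Omega,\nu)\setminus\{0\},\ \int_\Omega u\,d\nu=0\Big\}>0.$$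
   Context: Standing setting: $(\mathbb{X},d)$ complete separable metric space, $\nu$ a doubling Radon measure, $\mathbb{X}$ supports a weak $(1,1)$-Poincaré inequality; $\mathcal{H}$ is the codimension-one Hausdorff measure; $\Omega$ is a bounded open regular domain (finite perimeter and $|D\chi_\Omega|_\nu(\mathbb{X})=\limsup_{t\to0}\nu(\Omega\setminus\Omega_t)/t$, $\Omega_t=\{x\in\Omega:\mathrm{dist}(x,\mathbb{X}\setminus\Omega)\ge t\}$) such that each of $U=\Omega$, $U=\mathbb{X}\setminus\overline\Omega$ supports a weak $(1,1)$-Poincaré inequality, satisfies $\nu(B(x,r)\cap U)\ge C\nu(B(x,r))$ for $\mathcal{H}$-a.e. $x\in\partial U$, $r\in(0,\mathrm{diam}\,U)$, and $C^{-1}\nu(B(x,r))/r\le\mathcal{H}(B(x,r)\cap\partial U)\le C\nu(B(x,r))/r$ for $x\in\partial U$, $r\in(0,\mathrm{diam}\,U)$. $|Du|_\nu$: total variation; $\mathcal{TV}_N(u)=|Du|_\nu(\Omega)$ for $u\in BV(\Omega,d,\nu)\cap L^2(\Omega,\nu)$, $+\infty$ otherwise on $L^2(\Omega,\nu)$. The weak solution of the Neumann problem with initial datum $u_0\in L^2$ is the unique strong solution $u\in W^{1,1}(0,T;L^2(\Omega,\nu))$ of $u'(t)+\partial\mathcal{TV}_N(u(t))\ni0$, $u(0)=u_0$, where $\partial$ denotes the $L^2$-subdifferential. *)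

theory Defs
  imports "HOL-Analysis.Analysis"
begin

definition ediam :: "'a::metric_space set \<Rightarrow> ereal" where
  "ediam U = (SUP x\<in>U. SUP y\<in>U. ereal (dist x y))"

text \<open>Distance from a point to a set, with dist(x, empty) = +infinity.\<close>
definition edist_set :: "'a::metric_space \<Rightarrow> 'a set \<Rightarrow> ereal" where
  "edist_set x S = (INF y\<in>S. ereal (dist x y))"

definition inner_set :: "'a::metric_space set \<Rightarrow> real \<Rightarrow> 'a set" where
  "inner_set \<Omega> t = {x\<in>\<Omega>. edist_set x (- \<Omega>) \<ge> ereal t}"

definition doubling_radon :: "'a::metric_space measure \<Rightarrow> bool" where
  "doubling_radon \<nu> \<longleftrightarrow> sets \<nu> = sets borel \<and>
     (\<forall>x r. r > 0 \<longrightarrow> 0 < emeasure \<nu> (ball x r) \<and> emeasure \<nu> (ball x r) < \<infinity>) \<and>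
     (\<exists>Cd. \<forall>x r. r > 0 \<longrightarrow> emeasure \<nu> (ball x (2*r)) \<le> ennreal Cd * emeasure \<nu> (ball x r))"

text \<open>Codimension-one Hausdorff measure (spherical, via countable covers by balls).
  A ball of radius 0 is empty and contributes 0.\<close>
definition hcontrib :: "'a::metric_space measure \<Rightarrow> 'a \<Rightarrow> real \<Rightarrow> ennreal" where
  "hcontrib \<nu> x r = (if r = 0 then 0 else emeasure \<nu> (ball x r) / ennreal r)"

definition codim1_hausdorff_R :: "'a::metric_space measure \<Rightarrow> real \<Rightarrow> 'a set \<Rightarrow> ennreal" where
  "codim1_hausdorff_R \<nu> R A =
     (INF c\<in>{c :: nat \<Rightarrow> 'a \<times> real. (\<forall>i. 0 \<le> snd (c i) \<and> snd (c i) \<le> R) \<and>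
                A \<subseteq> (\<Union>i. ball (fst (c i)) (snd (c i)))}.
        (\<Sum>i. hcontrib \<nu> (fst (c i)) (snd (c i))))"

definition codim1_hausdorff :: "'a::metric_space measure \<Rightarrow> 'a set \<Rightarrow> ennreal" where
  "codim1_hausdorff \<nu> A = (SUP R\<in>{0<..}. codim1_hausdorff_R \<nu> R A)"

definition curve_length :: "(real \<Rightarrow> 'a::metric_space) \<Rightarrow> real \<Rightarrow> real \<Rightarrow> ereal" where
  "curve_length \<gamma> a b =
     (SUP p\<in>{(n, t). t 0 = a \<and> t n = b \<and> (\<forall>i<n. t i \<le> t (Suc i))}.
        ereal (\<Sum>i<fst p. dist (\<gamma> (snd p i)) (\<gamma> (snd p (Suc i)))))"

definition arc_length_param :: "(real \<Rightarrow> 'a::metric_space) \<Rightarrow> real \<Rightarrow> bool" where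
  "arc_length_param \<gamma> l \<longleftrightarrow>
     (\<forall>s t. 0 \<le> s \<and> s \<le> t \<and> t \<le> l \<longrightarrow> curve_length \<gamma> s t = ereal (t - s))"

definition upper_gradient :: "'a::metric_space set \<Rightarrow> ('a \<Rightarrow> real) \<Rightarrow> ('a \<Rightarrow> ennreal) \<Rightarrow> bool" where
  "upper_gradient U u g \<longleftrightarrow>
     (\<forall>l \<ge> 0. \<forall>\<gamma>. \<gamma> ` {0..l} \<subseteq> U \<and> arc_length_param \<gamma> l \<longrightarrow>
        ennreal \<bar>u (\<gamma> 0) - u (\<gamma> l)\<bar> \<le> (\<integral>\<^sup>+ s\<in>{0..l}. g (\<gamma> s) \<partial>lborel))"

definition mean :: "'a measure \<Rightarrow> 'a set \<Rightarrow> ('a \<Rightarrow> real) \<Rightarrow> real" where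
  "mean \<nu> A u = (\<integral>x\<in>A. u x \<partial>\<nu>) / measure \<nu> A"

definition weak_PI_11 :: "'a::metric_space measure \<Rightarrow> 'a set \<Rightarrow> bool" where
  "weak_PI_11 \<nu> U \<longleftrightarrow>
     (\<exists>C>0. \<exists>lam\<ge>1. \<forall>u g. u \<in> borel_measurable \<nu> \<and> g \<in> borel_measurable \<nu> \<and> upper_gradient U u g \<longrightarrow>
        (\<forall>x\<in>U. \<forall>r>0. set_integrable \<nu> (ball x (lam * r) \<inter> U) u \<longrightarrow>
           (\<integral>\<^sup>+ y\<in>ball x r \<inter> U. ennreal \<bar>u y - mean \<nu> (ball x r \<inter> U) u\<bar> \<partial>\<nu>)
               / emeasure \<nu> (ball x r \<inter> U)
           \<le> ennreal (C * r) * ((\<integral>\<^sup>+ y\<in>ball x (lam * r) \<inter> U. g y \<partial>\<nu>)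
               / emeasure \<nu> (ball x (lam * r) \<inter> U))))"

definition slope :: "('a::metric_space \<Rightarrow> real) \<Rightarrow> 'a \<Rightarrow> ennreal" where
  "slope u x = Limsup (at x) (\<lambda>y. ennreal (\<bar>u y - u x\<bar> / dist y x))"

definition loc_lipschitz_on :: "'a::metric_space set \<Rightarrow> ('a \<Rightarrow> real) \<Rightarrow> bool" where
  "loc_lipschitz_on U u \<longleftrightarrow>
     (\<forall>x\<in>U. \<exists>r>0. ball x r \<subseteq> U \<and>
        (\<exists>L. \<forall>y\<in>ball x r. \<forall>z\<in>ball x r. \<bar>u y - u z\<bar> \<le> L * dist y z))"

definition L1loc_conv :: "'a::metric_space measure \<Rightarrow> 'a set \<Rightarrow> (nat \<Rightarrow> 'a \<Rightarrow> real) \<Rightarrow> ('a \<Rightarrow> real) \<Rightarrow> bool" where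
  "L1loc_conv \<nu> U f u \<longleftrightarrow> (\<forall>i. f i \<in> borel_measurable \<nu>) \<and> u \<in> borel_measurable \<nu> \<and>
     (\<forall>x\<in>U. \<exists>r>0. ball x r \<subseteq> U \<and>
        (\<lambda>i. \<integral>\<^sup>+ y\<in>ball x r. ennreal \<bar>f i y - u y\<bar> \<partial>\<nu>) \<longlonglongrightarrow> 0)"

text \<open>Total variation |Du|_nu(U) of u on an open set U (Miranda's relaxation).\<close>
definition total_variation :: "'a::metric_space measure \<Rightarrow> 'a set \<Rightarrow> ('a \<Rightarrow> real) \<Rightarrow> ennreal" where
  "total_variation \<nu> U u =
     (INF f\<in>{f. (\<forall>i. loc_lipschitz_on U (f i)) \<and> L1loc_conv \<nu> U f u}.
        liminf (\<lambda>i. \<integral>\<^sup>+ x\<in>U. slope (f i) x \<partial>\<nu>))"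

definition memL1 :: "'a measure \<Rightarrow> 'a set \<Rightarrow> ('a \<Rightarrow> real) \<Rightarrow> bool" where
  "memL1 \<nu> U u \<longleftrightarrow> u \<in> borel_measurable \<nu> \<and> (\<integral>\<^sup>+ x\<in>U. ennreal \<bar>u x\<bar> \<partial>\<nu>) < \<infinity>"

definition memL2 :: "'a measure \<Rightarrow> 'a set \<Rightarrow> ('a \<Rightarrow> real) \<Rightarrow> bool" where
  "memL2 \<nu> U u \<longleftrightarrow> u \<in> borel_measurable \<nu> \<and> (\<integral>\<^sup>+ x\<in>U. ennreal ((u x)\<^sup>2) \<partial>\<nu>) < \<infinity>"

definition l2norm :: "'a measure \<Rightarrow> 'a set \<Rightarrow> ('a \<Rightarrow> real) \<Rightarrow> real" where
  "l2norm \<nu> U u = sqrt (enn2real (\<integral>\<^sup>+ x\<in>U. ennreal ((u x)\<^sup>2) \<partial>\<nu>))"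

definition memBV :: "'a::metric_space measure \<Rightarrow> 'a set \<Rightarrow> ('a \<Rightarrow> real) \<Rightarrow> bool" where
  "memBV \<nu> U u \<longleftrightarrow> memL1 \<nu> U u \<and> total_variation \<nu> U u < \<infinity>"

definition regular_domain :: "'a::metric_space measure \<Rightarrow> 'a set \<Rightarrow> bool" where
  "regular_domain \<nu> \<Omega> \<longleftrightarrow> open \<Omega> \<and> connected \<Omega> \<and> \<Omega> \<noteq> {} \<and> bounded \<Omega> \<and>
     total_variation \<nu> UNIV (indicator \<Omega>) < \<infinity> \<and>
     total_variation \<nu> UNIV (indicator \<Omega>) =
       Limsup (at_right 0) (\<lambda>t. emeasure \<nu> (\<Omega> - inner_set \<Omega> t) / ennreal t)"

definition boundary_conditions :: "'a::metric_space measure \<Rightarrow> 'a set \<Rightarrow> bool" where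
  "boundary_conditions \<nu> U \<longleftrightarrow>
     weak_PI_11 \<nu> U \<and>
     (\<exists>C>0. codim1_hausdorff \<nu> {x\<in>frontier U. \<not> (\<forall>r. 0 < r \<and> ereal r < ediam U \<longrightarrow>
                emeasure \<nu> (ball x r \<inter> U) \<ge> ennreal C * emeasure \<nu> (ball x r))} = 0) \<and>
     (\<exists>C>0. \<forall>x\<in>frontier U. \<forall>r. 0 < r \<and> ereal r < ediam U \<longrightarrow>
        emeasure \<nu> (ball x r) / ennreal (C * r) \<le> codim1_hausdorff \<nu> (ball x r \<inter> frontier U) \<and>
        codim1_hausdorff \<nu> (ball x r \<inter> frontier U) \<le> ennreal C * emeasure \<nu> (ball x r) / ennreal r)"

definition standing_setting :: "'a::polish_space measure \<Rightarrow> 'a set \<Rightarrow> bool" where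
  "standing_setting \<nu> \<Omega> \<longleftrightarrow> doubling_radon \<nu> \<and> weak_PI_11 \<nu> UNIV \<and>
     regular_domain \<nu> \<Omega> \<and> boundary_conditions \<nu> \<Omega> \<and> boundary_conditions \<nu> (- closure \<Omega>)"

definition TVN :: "'a::metric_space measure \<Rightarrow> 'a set \<Rightarrow> ('a \<Rightarrow> real) \<Rightarrow> ennreal" where
  "TVN \<nu> \<Omega> u = (if memBV \<nu> \<Omega> u \<and> memL2 \<nu> \<Omega> u then total_variation \<nu> \<Omega> u else \<infinity>)"

definition subdiff_TVN :: "'a::metric_space measure \<Rightarrow> 'a set \<Rightarrow> ('a \<Rightarrow> real) \<Rightarrow> ('a \<Rightarrow> real) set" where
  "subdiff_TVN \<nu> \<Omega> u = {v. memL2 \<nu> \<Omega> u \<and> memL2 \<nu> \<Omega> v \<and> TVN \<nu> \<Omega> u \<noteq> \<infinity> \<and>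
     (\<forall>w. memL2 \<nu> \<Omega> w \<longrightarrow>
        enn2ereal (TVN \<nu> \<Omega> w) \<ge> enn2ereal (TVN \<nu> \<Omega> u) + ereal (\<integral>x\<in>\<Omega>. v x * (w x - u x) \<partial>\<nu>))}"

definition abs_cont_L2 :: "'a measure \<Rightarrow> 'a set \<Rightarrow> (real \<Rightarrow> 'a \<Rightarrow> real) \<Rightarrow> real \<Rightarrow> bool" where
  "abs_cont_L2 \<nu> \<Omega> u T \<longleftrightarrow>
     (\<forall>\<epsilon>>0. \<exists>\<delta>>0. \<forall>(n::nat) a b.
        (\<forall>i<n. 0 \<le> a i \<and> a i \<le> b i \<and> b i \<le> T) \<and>
        (\<forall>i<n. \<forall>j<n. i \<noteq> j \<longrightarrow> b i \<le> a j \<or> b j \<le> a i) \<and>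
        (\<Sum>i<n. b i - a i) < \<delta> \<longrightarrow>
        (\<Sum>i<n. l2norm \<nu> \<Omega> (\<lambda>x. u (b i) x - u (a i) x)) < \<epsilon>)"

definition has_L2_deriv :: "'a measure \<Rightarrow> 'a set \<Rightarrow> (real \<Rightarrow> 'a \<Rightarrow> real) \<Rightarrow> ('a \<Rightarrow> real) \<Rightarrow> real \<Rightarrow> bool" where
  "has_L2_deriv \<nu> \<Omega> u v t \<longleftrightarrow> memL2 \<nu> \<Omega> v \<and>
     ((\<lambda>h. l2norm \<nu> \<Omega> (\<lambda>x. (u (t + h) x - u t x) / h - v x)) \<longlongrightarrow> 0) (at 0)"

text \<open>Strong solution u in W^{1,1}(0,T;L^2(Omega)) for every T>0 of
  u' + subdiff TVN (u) contains 0, u(0) = u0.\<close>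
definition TV_Neumann_solution :: "'a::metric_space measure \<Rightarrow> 'a set \<Rightarrow> ('a \<Rightarrow> real) \<Rightarrow> (real \<Rightarrow> 'a \<Rightarrow> real) \<Rightarrow> bool" where
  "TV_Neumann_solution \<nu> \<Omega> u0 u \<longleftrightarrow>
     (\<forall>t\<ge>0. memL2 \<nu> \<Omega> (u t)) \<and>
     (AE x in \<nu>. x \<in> \<Omega> \<longrightarrow> u 0 x = u0 x) \<and>
     (\<forall>T>0. abs_cont_L2 \<nu> \<Omega> u T \<and>
        (AE t in lborel. 0 < t \<and> t < T \<longrightarrow>
           (\<exists>v. has_L2_deriv \<nu> \<Omega> u v t \<and> (\<lambda>x. - v x) \<in> subdiff_TVN \<nu> \<Omega> (u t))))"

definition extinction_time :: "'a measure \<Rightarrow> 'a set \<Rightarrow> ('a \<Rightarrow> real) \<Rightarrow> (real \<Rightarrow> 'a \<Rightarrow> real) \<Rightarrow> ennreal" where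
  "extinction_time \<nu> \<Omega> u0 u =
     Inf (ennreal ` {T. T > 0 \<and> (\<forall>t\<ge>T. AE x in \<nu>. x \<in> \<Omega> \<longrightarrow> u t x = mean \<nu> \<Omega> u0)})"

definition lambda1_TVN :: "'a::metric_space measure \<Rightarrow> 'a set \<Rightarrow> ennreal" where
  "lambda1_TVN \<nu> \<Omega> =
     (INF w\<in>{w. memL2 \<nu> \<Omega> w \<and> l2norm \<nu> \<Omega> w \<noteq> 0 \<and> (\<integral>x\<in>\<Omega>. w x \<partial>\<nu>) = 0}.
        TVN \<nu> \<Omega> w / ennreal (l2norm \<nu> \<Omega> w))"

end

theory Submission
  imports Defs
begin

text \<open>Write c for the mean of u0 and psi(t) for the L2 distance of u(t) to c. The Poincare
  inequality gives lambda1 \<ge> 1/C > 0. Since TVN is invariant under adding constants, testing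
  the subgradient inequality for -u'(t) at u(t) against u(t) + 1 and u(t) - 1 shows that u'(t)
  has mean zero, so u(t) keeps the mean c. Testing it against c gives
  (u(t) - c, u'(t)) \<le> -TVN(u(t)) \<le> -lambda1 psi(t), the last step because u(t) - c has
  mean zero. Hence psi(t) + lambda1 t does not increase while psi is positive, and psi vanishes
  from time psi(0)/lambda1 \<le> \<parallel>u0\<parallel>/lambda1 on. As u is only absolutely continuous
  in time, both monotonicity arguments rest on the fact that an absolutely continuous real
  function whose upper right Dini derivative is a.e. nonpositive is nonincreasing.\<close>

section \<open>Absolutely continuous real functions\<close>

definition abs_cont_real :: "(real \<Rightarrow> real) \<Rightarrow> real \<Rightarrow> real \<Rightarrow> bool" where
  "abs_cont_real f a b \<longleftrightarrow> (\<forall>\<epsilon>>0. \<exists>\<delta>>0. \<forall>(n::nat) p q.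
     (\<forall>i<n. a \<le> p i \<and> p i \<le> q i \<and> q i \<le> b) \<and>
     (\<forall>i<n. \<forall>j<n. i \<noteq> j \<longrightarrow> q i \<le> p j \<or> q j \<le> p i) \<and>
     (\<Sum>i<n. q i - p i) < \<delta> \<longrightarrow> (\<Sum>i<n. \<bar>f (q i) - f (p i)\<bar>) < \<epsilon>)"

lemma abs_cont_realD:
  assumes "abs_cont_real f a b" "\<epsilon> > 0"
  obtains \<delta> where "\<delta> > 0"
    "\<And>(n::nat) p q. \<forall>i<n. a \<le> p i \<and> p i \<le> q i \<and> q i \<le> b \<Longrightarrow>
       \<forall>i<n. \<forall>j<n. i \<noteq> j \<longrightarrow> q i \<le> p j \<or> q j \<le> p i \<Longrightarrow>
       (\<Sum>i<n. q i - p i) < \<delta> \<Longrightarrow> (\<Sum>i<n. \<bar>f (q i) - f (p i)\<bar>) < \<epsilon>"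
proof -
  from assms obtain \<delta> where "\<delta> > 0" and small: "\<forall>(n::nat) p q.
     (\<forall>i<n. a \<le> p i \<and> p i \<le> q i \<and> q i \<le> b) \<and>
     (\<forall>i<n. \<forall>j<n. i \<noteq> j \<longrightarrow> q i \<le> p j \<or> q j \<le> p i) \<and>
     (\<Sum>i<n. q i - p i) < \<delta> \<longrightarrow> (\<Sum>i<n. \<bar>f (q i) - f (p i)\<bar>) < \<epsilon>"
    unfolding abs_cont_real_def by blast
  show ?thesis by (rule that[OF \<open>\<delta> > 0\<close>]) (use small in blast)
qed

lemma abs_cont_real_uminus: "abs_cont_real (\<lambda>s. - f s) a b = abs_cont_real f a b"
  unfolding abs_cont_real_def by (simp add: abs_minus_commute)

lemma abs_cont_real_imp_continuous_on:
  assumes "abs_cont_real f a b"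
  shows "continuous_on {a..b} f"
  unfolding continuous_on_iff
proof (intro ballI allI impI)
  fix x e :: real assume x: "x \<in> {a..b}" and e: "e > 0"
  obtain \<delta> where "\<delta> > 0" and small: "\<And>(n::nat) p q. \<forall>i<n. a \<le> p i \<and> p i \<le> q i \<and> q i \<le> b \<Longrightarrow>
       \<forall>i<n. \<forall>j<n. i \<noteq> j \<longrightarrow> q i \<le> p j \<or> q j \<le> p i \<Longrightarrow>
       (\<Sum>i<n. q i - p i) < \<delta> \<Longrightarrow> (\<Sum>i<n. \<bar>f (q i) - f (p i)\<bar>) < e"
    using abs_cont_realD[OF assms e] by blast
  have "dist (f y) (f x) < e" if "y \<in> {a..b}" "dist y x < \<delta>" for y
  proof -
    have "(\<Sum>i<Suc 0. \<bar>f ((\<lambda>_. max x y) i) - f ((\<lambda>_. min x y) i)\<bar>) < e"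
      by (rule small) (use x that in \<open>auto simp: dist_real_def\<close>)
    then show ?thesis by (cases "x \<le> y") (auto simp: dist_real_def max_def min_def abs_minus_commute)
  qed
  with \<open>\<delta> > 0\<close> show "\<exists>\<delta>>0. \<forall>y\<in>{a..b}. dist y x < \<delta> \<longrightarrow> dist (f y) (f x) < e" by blast
qed

lemma sum_nonoverlapping_lengths_le_emeasure:
  fixes n :: nat
  assumes "\<forall>i<n. p i \<le> q i" "\<forall>i<n. \<forall>j<n. i \<noteq> j \<longrightarrow> q i \<le> p j \<or> q j \<le> p i"
    and "\<forall>i<n. {p i..q i} \<subseteq> G" "G \<in> sets borel"
  shows "ennreal (\<Sum>i<n. q i - p i) \<le> emeasure lborel G"
proof -
  have disj: "disjoint_family_on (\<lambda>i. {p i<..q i}) {..<n}"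
    using assms(2) unfolding disjoint_family_on_def by fastforce
  have "ennreal (\<Sum>i<n. q i - p i) = (\<Sum>i<n. emeasure lborel {p i<..q i})"
    using assms(1) by (subst sum_ennreal[symmetric]) auto
  also have "\<dots> = emeasure lborel (\<Union>i<n. {p i<..q i})"
    using disj by (intro sum_emeasure) auto
  also have "\<dots> \<le> emeasure lborel G"
    using assms(3,4) by (intro emeasure_mono) fastforce+
  finally show ?thesis .
qed

lemma real_interval_sup_induct:
  fixes a b :: real
  assumes "a \<le> b" "P a"
    and closed: "\<And>x. x \<in> {a..b} \<Longrightarrow> (\<And>d. d > 0 \<Longrightarrow> \<exists>y\<in>{x - d<..x}. a \<le> y \<and> P y) \<Longrightarrow> P x"
    and step: "\<And>x. a \<le> x \<Longrightarrow> x < b \<Longrightarrow> P x \<Longrightarrow> \<exists>y\<in>{x<..b}. P y"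
  shows "P b"
proof -
  define S where "S = {x \<in> {a..b}. P x}"
  have "a \<in> S" using assms(1,2) by (simp add: S_def)
  have bdd: "bdd_above S" by (auto simp: S_def intro: bdd_aboveI[of _ b])
  define s where "s = Sup S"
  have s: "s \<in> {a..b}"
    using \<open>a \<in> S\<close> bdd cSup_upper[OF \<open>a \<in> S\<close> bdd] by (auto simp: s_def S_def intro!: cSup_least)
  have "P s"
  proof (rule closed[OF s])
    fix d :: real assume "d > 0"
    then have "s - d < Sup S" by (simp add: s_def)
    then obtain y where "y \<in> S" "s - d < y" using \<open>a \<in> S\<close> by (auto elim: less_cSupE)
    moreover have "y \<le> s" unfolding s_def using \<open>y \<in> S\<close> bdd by (rule cSup_upper)
    ultimately show "\<exists>y\<in>{s - d<..s}. a \<le> y \<and> P y" by (auto simp: S_def)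
  qed
  have "s = b"
  proof (rule ccontr)
    assume "s \<noteq> b"
    with s \<open>P s\<close> obtain y where "y \<in> {s<..b}" "P y" using step by fastforce
    moreover from this s have "y \<in> S" by (auto simp: S_def)
    then have "y \<le> s" unfolding s_def using bdd by (rule cSup_upper)
    ultimately show False by simp
  qed
  with \<open>P s\<close> show ?thesis by simp
qed

definition variation_sums :: "(real \<Rightarrow> real) \<Rightarrow> real set \<Rightarrow> real \<Rightarrow> real \<Rightarrow> real set" where
  "variation_sums f G a x = {(\<Sum>i<n. \<bar>f (q i) - f (p i)\<bar>) | (n::nat) p q.
     (\<forall>i<n. a \<le> p i \<and> p i \<le> q i \<and> q i \<le> x) \<and>
     (\<forall>i<n. \<forall>j<n. i \<noteq> j \<longrightarrow> q i \<le> p j \<or> q j \<le> p i) \<and> (\<forall>i<n. {p i..q i} \<subseteq> G)}"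

definition variation_within :: "(real \<Rightarrow> real) \<Rightarrow> real set \<Rightarrow> real \<Rightarrow> real \<Rightarrow> real" where
  "variation_within f G a x = Sup (variation_sums f G a x)"

lemma variation_sumsI:
  fixes n :: nat
  assumes "\<forall>i<n. a \<le> p i \<and> p i \<le> q i \<and> q i \<le> x"
    "\<forall>i<n. \<forall>j<n. i \<noteq> j \<longrightarrow> q i \<le> p j \<or> q j \<le> p i" "\<forall>i<n. {p i..q i} \<subseteq> G"
  shows "(\<Sum>i<n. \<bar>f (q i) - f (p i)\<bar>) \<in> variation_sums f G a x"
  unfolding variation_sums_def using assms by blast

lemma zero_in_variation_sums: "0 \<in> variation_sums f G a x"
  using variation_sumsI[of 0] by simp

lemma variation_sums_mono:
  assumes "x \<le> y"
  shows "variation_sums f G a x \<subseteq> variation_sums f G a y"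
proof
  fix s assume "s \<in> variation_sums f G a x"
  then obtain n p q where s: "s = (\<Sum>i<(n::nat). \<bar>f (q i) - f (p i)\<bar>)"
    "\<forall>i<n. a \<le> p i \<and> p i \<le> q i \<and> q i \<le> x"
    "\<forall>i<n. \<forall>j<n. i \<noteq> j \<longrightarrow> q i \<le> p j \<or> q j \<le> p i" "\<forall>i<n. {p i..q i} \<subseteq> G"
    unfolding variation_sums_def by blast
  have "\<forall>i<n. a \<le> p i \<and> p i \<le> q i \<and> q i \<le> y" using s(2) assms by force
  then show "s \<in> variation_sums f G a y" unfolding s(1) using s(3,4) by (rule variation_sumsI)
qed

lemma variation_sums_extend:
  assumes "s \<in> variation_sums f G a x" "a \<le> x" "x \<le> y" "{x..y} \<subseteq> G"
  shows "s + \<bar>f y - f x\<bar> \<in> variation_sums f G a y"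
proof -
  obtain n p q where s: "s = (\<Sum>i<(n::nat). \<bar>f (q i) - f (p i)\<bar>)"
    "\<forall>i<n. a \<le> p i \<and> p i \<le> q i \<and> q i \<le> x"
    "\<forall>i<n. \<forall>j<n. i \<noteq> j \<longrightarrow> q i \<le> p j \<or> q j \<le> p i" "\<forall>i<n. {p i..q i} \<subseteq> G"
    using assms(1) unfolding variation_sums_def by blast
  let ?p = "p(n := x)" and ?q = "q(n := y)"
  have "\<forall>i<Suc n. a \<le> ?p i \<and> ?p i \<le> ?q i \<and> ?q i \<le> y"
    using s(2) assms(2,3) by (auto simp: less_Suc_eq)
  moreover have "\<forall>i<Suc n. \<forall>j<Suc n. i \<noteq> j \<longrightarrow> ?q i \<le> ?p j \<or> ?q j \<le> ?p i"
    using s(2,3) by (auto simp: less_Suc_eq)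
  moreover have "\<forall>i<Suc n. {?p i..?q i} \<subseteq> G"
    using s(4) assms(4) by (auto simp: less_Suc_eq)
  ultimately have "(\<Sum>i<Suc n. \<bar>f (?q i) - f (?p i)\<bar>) \<in> variation_sums f G a y"
    by (rule variation_sumsI)
  then show ?thesis by (simp add: s(1))
qed

context
  fixes f :: "real \<Rightarrow> real" and a b \<epsilon> \<delta> :: real and G :: "real set"
  assumes small: "\<And>(n::nat) p q. \<forall>i<n. a \<le> p i \<and> p i \<le> q i \<and> q i \<le> b \<Longrightarrow>
       \<forall>i<n. \<forall>j<n. i \<noteq> j \<longrightarrow> q i \<le> p j \<or> q j \<le> p i \<Longrightarrow>
       (\<Sum>i<n. q i - p i) < \<delta> \<Longrightarrow> (\<Sum>i<n. \<bar>f (q i) - f (p i)\<bar>) < \<epsilon>"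
    and G: "G \<in> sets borel" "emeasure lborel G < \<delta>"
begin

lemma variation_sums_less:
  assumes "s \<in> variation_sums f G a x" "x \<le> b"
  shows "s < \<epsilon>"
proof -
  obtain n p q where s: "s = (\<Sum>i<(n::nat). \<bar>f (q i) - f (p i)\<bar>)"
    "\<forall>i<n. a \<le> p i \<and> p i \<le> q i \<and> q i \<le> x"
    "\<forall>i<n. \<forall>j<n. i \<noteq> j \<longrightarrow> q i \<le> p j \<or> q j \<le> p i" "\<forall>i<n. {p i..q i} \<subseteq> G"
    using assms(1) unfolding variation_sums_def by blast
  have "ennreal (\<Sum>i<n. q i - p i) \<le> emeasure lborel G"
    using s(2-4) G(1) by (intro sum_nonoverlapping_lengths_le_emeasure) auto
  then have "ennreal (\<Sum>i<n. q i - p i) < ennreal \<delta>" using G(2) by (rule le_less_trans)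
  then have "(\<Sum>i<n. q i - p i) < \<delta>" by (meson ennreal_leI not_le)
  moreover have "\<forall>i<n. a \<le> p i \<and> p i \<le> q i \<and> q i \<le> b" using s(2) assms(2) by force
  ultimately show ?thesis unfolding s(1) using small s(3) by blast
qed

lemma bdd_above_variation_sums: "x \<le> b \<Longrightarrow> bdd_above (variation_sums f G a x)"
  using variation_sums_less by (intro bdd_aboveI[of _ \<epsilon>]) (auto intro: less_imp_le)

lemma variation_within_nonneg: "x \<le> b \<Longrightarrow> 0 \<le> variation_within f G a x"
  unfolding variation_within_def by (rule cSup_upper[OF zero_in_variation_sums bdd_above_variation_sums])

lemma variation_within_le: "variation_within f G a b \<le> \<epsilon>"
  unfolding variation_within_def
proof (rule cSup_least)
  show "variation_sums f G a b \<noteq> {}" using zero_in_variation_sums by blast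
  show "s \<le> \<epsilon>" if "s \<in> variation_sums f G a b" for s
    using variation_sums_less[OF that order_refl] by simp
qed

lemma variation_within_mono:
  assumes "x \<le> y" "y \<le> b"
  shows "variation_within f G a x \<le> variation_within f G a y"
  unfolding variation_within_def
proof (rule cSup_subset_mono)
  show "variation_sums f G a x \<noteq> {}" using zero_in_variation_sums by blast
  show "bdd_above (variation_sums f G a y)" using assms(2) by (rule bdd_above_variation_sums)
  show "variation_sums f G a x \<subseteq> variation_sums f G a y" using assms(1) by (rule variation_sums_mono)
qed

lemma variation_within_extend:
  assumes "a \<le> x" "x \<le> y" "y \<le> b" "{x..y} \<subseteq> G"
  shows "variation_within f G a x + \<bar>f y - f x\<bar> \<le> variation_within f G a y"
proof -
  have "s \<le> variation_within f G a y - \<bar>f y - f x\<bar>" if "s \<in> variation_sums f G a x" for s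
    using cSup_upper[OF variation_sums_extend[OF that assms(1,2,4)] bdd_above_variation_sums[OF assms(3)]]
    by (simp add: variation_within_def)
  moreover have "variation_sums f G a x \<noteq> {}" using zero_in_variation_sums by blast
  ultimately have "variation_within f G a x \<le> variation_within f G a y - \<bar>f y - f x\<bar>"
    unfolding variation_within_def[of f G a x] by (intro cSup_least)
  then show ?thesis by simp
qed

end

definition dini_upper_right_nonpos :: "(real \<Rightarrow> real) \<Rightarrow> real \<Rightarrow> bool" where
  "dini_upper_right_nonpos f t \<longleftrightarrow>
     (\<forall>\<epsilon>>0. \<exists>\<eta>>0. \<forall>h. 0 < h \<and> h < \<eta> \<longrightarrow> f (t + h) - f t \<le> \<epsilon> * h)"

lemma dini_upper_right_nonpos_of_abs_bound:
  fixes f :: "real \<Rightarrow> real"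
  assumes "\<And>\<epsilon>. \<epsilon> > 0 \<Longrightarrow> \<exists>\<eta>>0. \<forall>h. 0 < h \<and> h < \<eta> \<longrightarrow> \<bar>f (t + h) - f t\<bar> \<le> \<epsilon> * h"
  shows "dini_upper_right_nonpos f t" "dini_upper_right_nonpos (\<lambda>s. - f s) t"
proof -
  have "\<exists>\<eta>>0. \<forall>h. 0 < h \<and> h < \<eta> \<longrightarrow> f (t + h) - f t \<le> \<epsilon> * h \<and> - f (t + h) - - f t \<le> \<epsilon> * h"
    if "\<epsilon> > 0" for \<epsilon>
  proof -
    from assms[OF that] obtain \<eta> where "\<eta> > 0" and \<eta>: "\<forall>h. 0 < h \<and> h < \<eta> \<longrightarrow> \<bar>f (t + h) - f t\<bar> \<le> \<epsilon> * h"
      by blast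
    then show ?thesis by (intro exI[of _ \<eta>]) (auto simp: abs_le_iff)
  qed
  then show "dini_upper_right_nonpos f t" "dini_upper_right_nonpos (\<lambda>s. - f s) t"
    unfolding dini_upper_right_nonpos_def by blast+
qed

lemma dini_growth_bound:
  fixes f V :: "real \<Rightarrow> real"
  assumes "a \<le> b" "\<epsilon> > 0" and cont: "continuous_on {a..b} f" and "open G" "a \<in> G"
    and "0 \<le> V a" and V_mono: "\<And>x y. x \<le> y \<Longrightarrow> y \<le> b \<Longrightarrow> V x \<le> V y"
    and V_ext: "\<And>x y. a \<le> x \<Longrightarrow> x \<le> y \<Longrightarrow> y \<le> b \<Longrightarrow> {x..y} \<subseteq> G \<Longrightarrow> V x + \<bar>f y - f x\<bar> \<le> V y"
    and dini: "\<And>t. t \<in> {a<..<b} - G \<Longrightarrow> \<exists>\<eta>>0. \<forall>h. 0 < h \<and> h < \<eta> \<longrightarrow> f (t + h) - f t \<le> \<epsilon> * h"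
  shows "f b - f a \<le> \<epsilon> * (b - a) + V b"
proof (rule real_interval_sup_induct[where P = "\<lambda>x. f x - f a \<le> \<epsilon> * (x - a) + V x"])
  show "f a - f a \<le> \<epsilon> * (a - a) + V a" using \<open>0 \<le> V a\<close> by simp
next
  fix x assume x: "x \<in> {a..b}"
    and approx: "\<And>d. d > 0 \<Longrightarrow> \<exists>y\<in>{x - d<..x}. a \<le> y \<and> f y - f a \<le> \<epsilon> * (y - a) + V y"
  show "f x - f a \<le> \<epsilon> * (x - a) + V x"
  proof (rule field_le_epsilon)
    fix e :: real assume "e > 0"
    with cont x obtain d where "d > 0" and d: "\<forall>y\<in>{a..b}. dist y x < d \<longrightarrow> dist (f y) (f x) < e"
      unfolding continuous_on_iff by blast
    obtain y where y: "y \<in> {x - d<..x}" "a \<le> y" "f y - f a \<le> \<epsilon> * (y - a) + V y"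
      using approx[OF \<open>d > 0\<close>] by blast
    have "\<bar>f y - f x\<bar> < e" using d x y by (auto simp: dist_real_def)
    moreover have "V y \<le> V x" using V_mono x y by auto
    moreover have "\<epsilon> * (y - a) \<le> \<epsilon> * (x - a)" using \<open>\<epsilon> > 0\<close> y by auto
    ultimately show "f x - f a \<le> \<epsilon> * (x - a) + V x + e" using y(3) by linarith
  qed
next
  fix x assume x: "a \<le> x" "x < b" and Px: "f x - f a \<le> \<epsilon> * (x - a) + V x"
  show "\<exists>y\<in>{x<..b}. f y - f a \<le> \<epsilon> * (y - a) + V y"
  proof (cases "x \<in> G")
    case True
    then obtain r where "r > 0" "ball x r \<subseteq> G" using \<open>open G\<close> open_contains_ball by blast
    define y where "y = min (x + r/2) b"
    have y: "x < y" "y \<le> b" "{x..y} \<subseteq> G"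
      using \<open>r > 0\<close> \<open>ball x r \<subseteq> G\<close> x by (auto simp: y_def dist_real_def)
    have "V x + \<bar>f y - f x\<bar> \<le> V y" using V_ext x y by auto
    moreover have "\<epsilon> * (x - a) \<le> \<epsilon> * (y - a)" using \<open>\<epsilon> > 0\<close> y by auto
    ultimately show ?thesis using Px y by (intro bexI[of _ y]) auto
  next
    case False
    with \<open>a \<in> G\<close> x have "x \<in> {a<..<b} - G" by (cases "x = a") auto
    then obtain \<eta> where "\<eta> > 0" and \<eta>: "\<forall>h. 0 < h \<and> h < \<eta> \<longrightarrow> f (x + h) - f x \<le> \<epsilon> * h"
      using dini by blast
    define h where "h = min (\<eta>/2) ((b - x)/2)"
    have h: "0 < h" "h < \<eta>" "x + h \<le> b" using \<open>\<eta> > 0\<close> x by (auto simp: h_def min_def field_simps)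
    have "f (x + h) - f x \<le> \<epsilon> * h" using \<eta> h by auto
    moreover have "V x \<le> V (x + h)" using V_mono h by auto
    ultimately have "f (x + h) - f a \<le> \<epsilon> * (x + h - a) + V (x + h)"
      using Px by (simp add: algebra_simps)
    then show ?thesis using h by (intro bexI[of _ "x + h"]) auto
  qed
qed (fact \<open>a \<le> b\<close>)

lemma null_set_in_small_open_set:
  fixes \<delta> :: real
  assumes "N \<in> null_sets lborel" "0 < \<delta>"
  obtains G :: "real set" where "open G" "N \<subseteq> G" "emeasure lborel G < \<delta>"
proof -
  have "N \<in> sets borel" using assms(1) by (auto dest: null_setsD2)
  then obtain G where G: "open G" "N \<subseteq> G" "emeasure lborel (G - N) < \<delta>"
    using outer_regular_lborel assms(2) by blast
  moreover have "emeasure lborel (G - N) = emeasure lborel G"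
    using assms(1) borel_open[OF G(1)] by (simp add: emeasure_Diff_null_set)
  ultimately show ?thesis using that by simp
qed

text \<open>The points violating the Dini bound form a null set. Covering it by an open set G
  of measure below the modulus of absolute continuity makes the variation of f inside G
  small, while outside G the Dini bound lets f grow by at most epsilon per unit time.\<close>
lemma abs_cont_real_decreasing:
  fixes f :: "real \<Rightarrow> real"
  assumes ac: "abs_cont_real f a b" and "a \<le> b"
    and dini: "AE t in lborel. a < t \<and> t < b \<longrightarrow> dini_upper_right_nonpos f t"
  shows "f b \<le> f a"
proof -
  have growth: "f b - f a \<le> \<epsilon> * (b - a + 1)" if "\<epsilon> > 0" for \<epsilon>
  proof -
    obtain \<delta> where "\<delta> > 0" and small: "\<And>(n::nat) p q. \<forall>i<n. a \<le> p i \<and> p i \<le> q i \<and> q i \<le> b \<Longrightarrow>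
       \<forall>i<n. \<forall>j<n. i \<noteq> j \<longrightarrow> q i \<le> p j \<or> q j \<le> p i \<Longrightarrow>
       (\<Sum>i<n. q i - p i) < \<delta> \<Longrightarrow> (\<Sum>i<n. \<bar>f (q i) - f (p i)\<bar>) < \<epsilon>"
      using abs_cont_realD[OF ac \<open>\<epsilon> > 0\<close>] by blast
    obtain N where N: "{t \<in> space lborel. \<not> (a < t \<and> t < b \<longrightarrow> dini_upper_right_nonpos f t)} \<subseteq> N"
      "emeasure lborel N = 0" "N \<in> sets lborel"
      using AE_E[OF dini] by blast
    have "insert a N \<in> null_sets lborel"
      using N(2,3) by (simp add: null_setsI null_sets.insert_in_sets)
    then obtain G where G: "open G" "insert a N \<subseteq> G" "emeasure lborel G < \<delta>"
      using \<open>\<delta> > 0\<close> by (rule null_set_in_small_open_set)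
    then have "G \<in> sets borel" "emeasure lborel G < \<delta>" using borel_open[OF G(1)] by auto
    note small_G = small this
    have "f b - f a \<le> \<epsilon> * (b - a) + variation_within f G a b"
    proof (rule dini_growth_bound)
      show "continuous_on {a..b} f" by (rule abs_cont_real_imp_continuous_on[OF ac])
      show "0 \<le> variation_within f G a a"
        by (rule variation_within_nonneg[OF small_G \<open>a \<le> b\<close>])
      show "variation_within f G a x \<le> variation_within f G a y" if "x \<le> y" "y \<le> b" for x y
        by (rule variation_within_mono[OF small_G that])
      show "variation_within f G a x + \<bar>f y - f x\<bar> \<le> variation_within f G a y"
        if "a \<le> x" "x \<le> y" "y \<le> b" "{x..y} \<subseteq> G" for x y
        by (rule variation_within_extend[OF small_G that])
      show "\<exists>\<eta>>0. \<forall>h. 0 < h \<and> h < \<eta> \<longrightarrow> f (t + h) - f t \<le> \<epsilon> * h" if "t \<in> {a<..<b} - G" for t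
      proof -
        have "t \<notin> N" using that G(2) by blast
        with N(1) have "dini_upper_right_nonpos f t" using that by auto
        with \<open>\<epsilon> > 0\<close> show ?thesis unfolding dini_upper_right_nonpos_def by blast
      qed
    qed (use G(1,2) \<open>\<epsilon> > 0\<close> \<open>a \<le> b\<close> in auto)
    moreover have "variation_within f G a b \<le> \<epsilon>" by (rule variation_within_le[OF small_G])
    ultimately show ?thesis by (simp add: algebra_simps)
  qed
  have "f b - f a \<le> 0 + e" if "e > 0" for e
    using growth[of "e / (b - a + 1)"] that \<open>a \<le> b\<close> by simp
  then show ?thesis using field_le_epsilon[of "f b - f a" 0] by simp
qed

lemma time_bound_while_positive:
  fixes \<psi> :: "real \<Rightarrow> real"
  assumes cont: "continuous_on {0..t} \<psi>" and "\<And>s. 0 \<le> \<psi> s" "0 \<le> lam" "0 \<le> t" "0 < \<psi> t"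
    and decay: "\<And>a b. 0 \<le> a \<Longrightarrow> a \<le> b \<Longrightarrow> b \<le> t \<Longrightarrow> \<forall>s\<in>{a..b}. 0 < \<psi> s \<Longrightarrow>
       \<psi> b + lam * b \<le> \<psi> a + lam * a"
  shows "lam * t < \<psi> 0"
proof -
  define Z where "Z = {s \<in> {0..t}. \<psi> s = 0}"
  show ?thesis
  proof (cases "Z = {}")
    case True
    with assms(2) have "\<forall>s\<in>{0..t}. 0 < \<psi> s" by (force simp: Z_def order_less_le)
    with decay[of 0 t] \<open>0 \<le> t\<close> have "\<psi> t + lam * t \<le> \<psi> 0" by simp
    with \<open>0 < \<psi> t\<close> show ?thesis by linarith
  next
    case False
    have "closed Z" unfolding Z_def by (rule continuous_closed_preimage_constant[OF cont]) simp
    moreover have "bdd_above Z" by (auto simp: Z_def intro: bdd_aboveI[of _ t])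
    ultimately have "Sup Z \<in> Z" using closed_contains_Sup[OF False] by blast
    then obtain z where z: "z \<in> {0..t}" "\<psi> z = 0" and z_max: "\<And>s. s \<in> Z \<Longrightarrow> s \<le> z"
      using cSup_upper[OF _ \<open>bdd_above Z\<close>] by (auto simp: Z_def)
    have "z < t" using z \<open>0 < \<psi> t\<close> by (cases "z = t") auto
    obtain d where "d > 0" and d: "\<forall>y\<in>{0..t}. dist y z < d \<longrightarrow> dist (\<psi> y) (\<psi> z) < \<psi> t"
      using cont z(1) \<open>0 < \<psi> t\<close> unfolding continuous_on_iff by blast
    define y where "y = min (z + d / 2) t"
    have y: "z < y" "y \<le> t" "y \<in> {0..t}" "dist y z < d"
      using \<open>d > 0\<close> \<open>z < t\<close> z(1) by (auto simp: y_def dist_real_def)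
    have "\<forall>s\<in>{y..t}. 0 < \<psi> s"
    proof
      fix s assume "s \<in> {y..t}"
      with y z(1) have "s \<in> {0..t}" "z < s" by auto
      with z_max[of s] assms(2)[of s] show "0 < \<psi> s" by (force simp: Z_def order_less_le)
    qed
    with decay[of y t] y z(1) have "\<psi> t + lam * t \<le> \<psi> y + lam * y" by auto
    moreover have "lam * y \<le> lam * t" using \<open>0 \<le> lam\<close> y by (simp add: mult_left_mono)
    moreover have "\<psi> y < \<psi> t" using d[rule_format, OF y(3,4)] z(2) by (simp add: dist_real_def)
    ultimately show ?thesis by simp
  qed
qed

section \<open>Square integrable functions on the domain\<close>

lemma quadratic_nonneg_imp_discriminant:
  fixes A B C :: real
  assumes "\<And>s. 0 \<le> A + 2 * s * B + s\<^sup>2 * C" "0 \<le> C"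
  shows "B\<^sup>2 \<le> A * C"
proof (cases "C = 0")
  case True
  have "B = 0"
  proof (rule ccontr)
    assume "B \<noteq> 0"
    have "0 \<le> A + 2 * (-(A + 1) / (2 * B)) * B + (-(A + 1) / (2 * B))\<^sup>2 * C" by (rule assms(1))
    with True \<open>B \<noteq> 0\<close> show False by (simp add: field_simps)
  qed
  with True show ?thesis by simp
next
  case False
  with assms(2) have "C > 0" by simp
  have "0 \<le> A + 2 * (-B / C) * B + (-B / C)\<^sup>2 * C" by (rule assms(1))
  also have "\<dots> = A - B\<^sup>2 / C" using \<open>C > 0\<close> by (simp add: field_simps power2_eq_square)
  finally show ?thesis using \<open>C > 0\<close> by (simp add: field_simps)
qed

lemma l2norm_nonneg: "0 \<le> l2norm \<nu> \<Omega> f"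
  by (simp add: l2norm_def)

lemma l2norm_minus_commute: "l2norm \<nu> \<Omega> (\<lambda>x. f x - g x) = l2norm \<nu> \<Omega> (\<lambda>x. g x - f x)"
  by (simp add: l2norm_def power2_commute)

locale L2_domain =
  fixes \<nu> :: "'a::metric_space measure" and \<Omega> :: "'a set"
  assumes domain_sets: "\<Omega> \<in> sets \<nu>" and finite_domain: "emeasure \<nu> \<Omega> < \<infinity>"
    and open_domain: "open \<Omega>"
begin

abbreviation "M \<equiv> restrict_space \<nu> \<Omega>"

lemma domain_sets_Int_space: "\<Omega> \<inter> space \<nu> \<in> sets \<nu>"
  using domain_sets by simp

lemma space_M: "space M = \<Omega>"
  using sets.sets_into_space[OF domain_sets] by (auto simp: space_restrict_space)

sublocale M: finite_measure M
proof
  have "emeasure M (space M) = emeasure \<nu> \<Omega>"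
    using domain_sets_Int_space by (simp add: space_M emeasure_restrict_space)
  with finite_domain show "emeasure M (space M) \<noteq> \<infinity>" by simp
qed

lemma set_nn_integral_eq: "(\<integral>\<^sup>+x\<in>\<Omega>. g x \<partial>\<nu>) = (\<integral>\<^sup>+x. g x \<partial>M)"
  by (simp add: nn_integral_restrict_space[OF domain_sets_Int_space])

lemma set_integral_eq: "(\<integral>x\<in>\<Omega>. f x \<partial>\<nu>) = integral\<^sup>L M (f :: 'a \<Rightarrow> real)"
  by (simp add: integral_restrict_space[OF domain_sets_Int_space] set_lebesgue_integral_def)

lemma measurable_M: "f \<in> borel_measurable \<nu> \<Longrightarrow> f \<in> borel_measurable M"
  by (rule measurable_restrict_space1)

lemma integral_one: "integral\<^sup>L M (\<lambda>x. 1::real) = measure \<nu> \<Omega>"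
  using domain_sets_Int_space by (simp add: space_M measure_restrict_space)

lemma memL2_iff: "memL2 \<nu> \<Omega> f \<longleftrightarrow> f \<in> borel_measurable \<nu> \<and> integrable M (\<lambda>x. (f x)\<^sup>2)"
proof
  assume "memL2 \<nu> \<Omega> f"
  then have m: "f \<in> borel_measurable \<nu>" and fin: "(\<integral>\<^sup>+x. ennreal ((f x)\<^sup>2) \<partial>M) < \<infinity>"
    unfolding memL2_def set_nn_integral_eq by auto
  have "integrable M (\<lambda>x. (f x)\<^sup>2)"
    by (rule integrableI_nonneg) (use measurable_M[OF m] fin in auto)
  with m show "f \<in> borel_measurable \<nu> \<and> integrable M (\<lambda>x. (f x)\<^sup>2)" by simp
next
  assume "f \<in> borel_measurable \<nu> \<and> integrable M (\<lambda>x. (f x)\<^sup>2)"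
  then show "memL2 \<nu> \<Omega> f"
    unfolding memL2_def set_nn_integral_eq by (simp add: nn_integral_eq_integral)
qed

lemma memL1_iff: "memL1 \<nu> \<Omega> f \<longleftrightarrow> f \<in> borel_measurable \<nu> \<and> integrable M f"
  unfolding memL1_def set_nn_integral_eq
  by (auto simp: integrable_iff_bounded intro: measurable_M)

lemma l2norm_eq: "memL2 \<nu> \<Omega> f \<Longrightarrow> l2norm \<nu> \<Omega> f = sqrt (integral\<^sup>L M (\<lambda>x. (f x)\<^sup>2))"
  unfolding l2norm_def set_nn_integral_eq by (simp add: memL2_iff nn_integral_eq_integral)

lemma l2norm_square: "memL2 \<nu> \<Omega> f \<Longrightarrow> (l2norm \<nu> \<Omega> f)\<^sup>2 = integral\<^sup>L M (\<lambda>x. (f x)\<^sup>2)"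
  by (simp add: l2norm_eq)

lemma memL2_const: "memL2 \<nu> \<Omega> (\<lambda>x. c)"
  by (simp add: memL2_iff)

lemma memL2_lin:
  assumes "memL2 \<nu> \<Omega> f" "memL2 \<nu> \<Omega> g"
  shows "memL2 \<nu> \<Omega> (\<lambda>x. a * f x + b * g x)"
proof -
  have f: "f \<in> borel_measurable \<nu>" "integrable M (\<lambda>x. (f x)\<^sup>2)"
    and g: "g \<in> borel_measurable \<nu>" "integrable M (\<lambda>x. (g x)\<^sup>2)"
    using assms by (auto simp: memL2_iff)
  have "integrable M (\<lambda>x. (a * f x + b * g x)\<^sup>2)"
  proof (rule Bochner_Integration.integrable_bound)
    show "integrable M (\<lambda>x. 2 * a\<^sup>2 * (f x)\<^sup>2 + 2 * b\<^sup>2 * (g x)\<^sup>2)" using f(2) g(2) by auto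
    show "(\<lambda>x. (a * f x + b * g x)\<^sup>2) \<in> borel_measurable M"
      using measurable_M[OF f(1)] measurable_M[OF g(1)] by measurable
    have "(a * f x + b * g x)\<^sup>2 \<le> 2 * a\<^sup>2 * (f x)\<^sup>2 + 2 * b\<^sup>2 * (g x)\<^sup>2" for x
      using zero_le_power2[of "a * f x - b * g x"] by (simp add: power2_eq_square algebra_simps)
    then show "AE x in M. norm ((a * f x + b * g x)\<^sup>2) \<le> norm (2 * a\<^sup>2 * (f x)\<^sup>2 + 2 * b\<^sup>2 * (g x)\<^sup>2)"
      by simp
  qed
  with f(1) g(1) show ?thesis by (simp add: memL2_iff)
qed

lemma memL2_diff: "memL2 \<nu> \<Omega> f \<Longrightarrow> memL2 \<nu> \<Omega> g \<Longrightarrow> memL2 \<nu> \<Omega> (\<lambda>x. f x - g x)"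
  using memL2_lin[of f g 1 "-1"] by simp

lemma memL2_add_const_iff: "memL2 \<nu> \<Omega> (\<lambda>x. f x + c) \<longleftrightarrow> memL2 \<nu> \<Omega> f"
  using memL2_lin[OF _ memL2_const, of "\<lambda>x. f x + c" 1 "-c" 1] memL2_lin[OF _ memL2_const, of f 1 c 1]
  by auto

lemma memL2_uminus_iff: "memL2 \<nu> \<Omega> (\<lambda>x. - f x) \<longleftrightarrow> memL2 \<nu> \<Omega> f"
  using memL2_lin[of "\<lambda>x. - f x" "\<lambda>x. - f x" "-1" 0] memL2_lin[of f f "-1" 0] by auto

lemma memL2_integrable: "memL2 \<nu> \<Omega> f \<Longrightarrow> integrable M f"
  by (auto simp: memL2_iff intro: M.square_integrable_imp_integrable measurable_M)

lemma memL2_integrable_mult: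
  assumes "memL2 \<nu> \<Omega> f" "memL2 \<nu> \<Omega> g"
  shows "integrable M (\<lambda>x. f x * g x)"
proof -
  have f: "f \<in> borel_measurable \<nu>" "integrable M (\<lambda>x. (f x)\<^sup>2)"
    and g: "g \<in> borel_measurable \<nu>" "integrable M (\<lambda>x. (g x)\<^sup>2)"
    using assms by (auto simp: memL2_iff)
  show ?thesis
  proof (rule Bochner_Integration.integrable_bound)
    show "integrable M (\<lambda>x. (f x)\<^sup>2 + (g x)\<^sup>2)" using f(2) g(2) by auto
    show "(\<lambda>x. f x * g x) \<in> borel_measurable M"
      using measurable_M[OF f(1)] measurable_M[OF g(1)] by measurable
    have "\<bar>f x * g x\<bar> \<le> (f x)\<^sup>2 + (g x)\<^sup>2" for x
    proof -
      have "2 * (\<bar>f x\<bar> * \<bar>g x\<bar>) \<le> (f x)\<^sup>2 + (g x)\<^sup>2"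
        using zero_le_power2[of "\<bar>f x\<bar> - \<bar>g x\<bar>"] by (simp add: power2_eq_square algebra_simps)
      moreover have "0 \<le> \<bar>f x\<bar> * \<bar>g x\<bar>" by simp
      ultimately show ?thesis unfolding abs_mult by linarith
    qed
    then show "AE x in M. norm (f x * g x) \<le> norm ((f x)\<^sup>2 + (g x)\<^sup>2)" by simp
  qed
qed

lemma l2norm_add_scaled_square:
  assumes "memL2 \<nu> \<Omega> f" "memL2 \<nu> \<Omega> g"
  shows "(l2norm \<nu> \<Omega> (\<lambda>x. f x + s * g x))\<^sup>2 =
    (l2norm \<nu> \<Omega> f)\<^sup>2 + 2 * s * integral\<^sup>L M (\<lambda>x. f x * g x) + s\<^sup>2 * (l2norm \<nu> \<Omega> g)\<^sup>2"
proof -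
  have "(\<lambda>x. (f x + s * g x)\<^sup>2) = (\<lambda>x. (f x)\<^sup>2 + (2 * s) * (f x * g x) + s\<^sup>2 * (g x)\<^sup>2)"
    by (auto simp: power2_eq_square algebra_simps)
  moreover have "memL2 \<nu> \<Omega> (\<lambda>x. 1 * f x + s * g x)" by (rule memL2_lin[OF assms])
  ultimately show ?thesis
    using assms memL2_integrable_mult[OF assms] by (simp add: l2norm_square memL2_iff)
qed

lemma cauchy_schwarz:
  assumes "memL2 \<nu> \<Omega> f" "memL2 \<nu> \<Omega> g"
  shows "\<bar>integral\<^sup>L M (\<lambda>x. f x * g x)\<bar> \<le> l2norm \<nu> \<Omega> f * l2norm \<nu> \<Omega> g"
proof -
  have "(integral\<^sup>L M (\<lambda>x. f x * g x))\<^sup>2 \<le> (l2norm \<nu> \<Omega> f)\<^sup>2 * (l2norm \<nu> \<Omega> g)\<^sup>2"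
  proof (rule quadratic_nonneg_imp_discriminant)
    show "0 \<le> (l2norm \<nu> \<Omega> f)\<^sup>2 + 2 * s * integral\<^sup>L M (\<lambda>x. f x * g x) + s\<^sup>2 * (l2norm \<nu> \<Omega> g)\<^sup>2" for s
      using l2norm_add_scaled_square[OF assms, of s] by (metis zero_le_power2)
  qed simp
  then show ?thesis
    using l2norm_nonneg[of \<nu> \<Omega> f] l2norm_nonneg[of \<nu> \<Omega> g]
    by (metis abs_le_square_iff abs_mult abs_of_nonneg power_mult_distrib)
qed

lemma l2norm_triangle:
  assumes "memL2 \<nu> \<Omega> f" "memL2 \<nu> \<Omega> g"
  shows "l2norm \<nu> \<Omega> (\<lambda>x. f x + g x) \<le> l2norm \<nu> \<Omega> f + l2norm \<nu> \<Omega> g"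
proof (rule power2_le_imp_le)
  have "(l2norm \<nu> \<Omega> (\<lambda>x. f x + 1 * g x))\<^sup>2 =
      (l2norm \<nu> \<Omega> f)\<^sup>2 + 2 * integral\<^sup>L M (\<lambda>x. f x * g x) + (l2norm \<nu> \<Omega> g)\<^sup>2"
    using l2norm_add_scaled_square[OF assms, of 1] by simp
  also have "\<dots> \<le> (l2norm \<nu> \<Omega> f + l2norm \<nu> \<Omega> g)\<^sup>2"
    using abs_le_D1[OF cauchy_schwarz[OF assms]] by (simp add: power2_sum)
  finally show "(l2norm \<nu> \<Omega> (\<lambda>x. f x + g x))\<^sup>2 \<le> (l2norm \<nu> \<Omega> f + l2norm \<nu> \<Omega> g)\<^sup>2" by simp
  show "0 \<le> l2norm \<nu> \<Omega> f + l2norm \<nu> \<Omega> g" by (simp add: add_nonneg_nonneg l2norm_nonneg)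
qed

lemma abs_integral_le_l2norm:
  assumes "memL2 \<nu> \<Omega> f"
  shows "\<bar>integral\<^sup>L M f\<bar> \<le> l2norm \<nu> \<Omega> (\<lambda>x. 1) * l2norm \<nu> \<Omega> f"
  using cauchy_schwarz[OF memL2_const assms, of 1] by simp

lemma l2norm_eq_0_imp_AE:
  assumes "memL2 \<nu> \<Omega> f" "l2norm \<nu> \<Omega> f = 0"
  shows "AE x in \<nu>. x \<in> \<Omega> \<longrightarrow> f x = 0"
proof -
  have "integral\<^sup>L M (\<lambda>x. (f x)\<^sup>2) = 0" using assms l2norm_square by fastforce
  with assms(1) have "AE x in M. (f x)\<^sup>2 = 0"
    by (subst (asm) integral_nonneg_eq_0_iff_AE) (auto simp: memL2_iff)
  then show ?thesis by (simp add: AE_restrict_space_iff[OF domain_sets_Int_space])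
qed

lemma l2norm_cong_AE:
  assumes "AE x in \<nu>. x \<in> \<Omega> \<longrightarrow> f x = g x"
  shows "l2norm \<nu> \<Omega> f = l2norm \<nu> \<Omega> g"
proof -
  have "(\<integral>\<^sup>+x\<in>\<Omega>. ennreal ((f x)\<^sup>2) \<partial>\<nu>) = (\<integral>\<^sup>+x\<in>\<Omega>. ennreal ((g x)\<^sup>2) \<partial>\<nu>)"
    using assms by (intro nn_integral_cong_AE) (auto elim!: eventually_mono split: split_indicator)
  then show ?thesis unfolding l2norm_def by simp
qed

lemma difference_quotient_remainder:
  assumes "has_L2_deriv \<nu> \<Omega> u v s" "memL2 \<nu> \<Omega> (u s)" "\<And>h. 0 < h \<Longrightarrow> memL2 \<nu> \<Omega> (u (s + h))"
    and "e > 0"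
  obtains \<eta> where "\<eta> > 0" "\<And>h. 0 < h \<Longrightarrow> h < \<eta> \<Longrightarrow>
    memL2 \<nu> \<Omega> (\<lambda>x. (u (s + h) x - u s x) / h - v x) \<and>
    l2norm \<nu> \<Omega> (\<lambda>x. (u (s + h) x - u s x) / h - v x) < e"
proof -
  have v: "memL2 \<nu> \<Omega> v" and lim: "((\<lambda>h. l2norm \<nu> \<Omega> (\<lambda>x. (u (s + h) x - u s x) / h - v x)) \<longlongrightarrow> 0) (at 0)"
    using assms(1) by (auto simp: has_L2_deriv_def)
  from lim \<open>e > 0\<close> obtain \<eta> where "\<eta> > 0"
    and \<eta>: "\<And>h. h \<noteq> 0 \<Longrightarrow> dist h 0 < \<eta> \<Longrightarrow> dist (l2norm \<nu> \<Omega> (\<lambda>x. (u (s + h) x - u s x) / h - v x)) 0 < e"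
    unfolding tendsto_iff eventually_at by blast
  show ?thesis
  proof (rule that[OF \<open>\<eta> > 0\<close>])
    fix h :: real assume "0 < h" "h < \<eta>"
    have "memL2 \<nu> \<Omega> (\<lambda>x. 1 * ((1 / h) * u (s + h) x + (- 1 / h) * u s x) + (- 1) * v x)"
      using assms(2,3) \<open>0 < h\<close> v by (intro memL2_lin) auto
    moreover have "(\<lambda>x. 1 * ((1 / h) * u (s + h) x + (- 1 / h) * u s x) + (- 1) * v x) =
        (\<lambda>x. (u (s + h) x - u s x) / h - v x)"
      using \<open>0 < h\<close> by (auto simp: field_simps)
    moreover have "l2norm \<nu> \<Omega> (\<lambda>x. (u (s + h) x - u s x) / h - v x) < e"
      using \<eta>[of h] \<open>0 < h\<close> \<open>h < \<eta>\<close> by (simp add: dist_real_def l2norm_nonneg)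
    ultimately show "memL2 \<nu> \<Omega> (\<lambda>x. (u (s + h) x - u s x) / h - v x) \<and>
        l2norm \<nu> \<Omega> (\<lambda>x. (u (s + h) x - u s x) / h - v x) < e" by simp
  qed
qed

end

section \<open>Total variation and the subdifferential of TVN\<close>

lemma slope_add_const: "slope (\<lambda>x. f x + c) = slope f"
  unfolding slope_def by simp

lemma loc_lipschitz_on_add_const: "loc_lipschitz_on U (\<lambda>x. f x + c) = loc_lipschitz_on U f"
  unfolding loc_lipschitz_on_def by simp

lemma L1loc_conv_add_const:
  assumes "L1loc_conv \<nu> U f u"
  shows "L1loc_conv \<nu> U (\<lambda>i x. f i x + c) (\<lambda>x. u x + c)"
proof -
  from assms have "\<And>i. f i \<in> borel_measurable \<nu>" "u \<in> borel_measurable \<nu>"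
    by (auto simp: L1loc_conv_def)
  then have "\<And>i. (\<lambda>x. f i x + c) \<in> borel_measurable \<nu>" "(\<lambda>x. u x + c) \<in> borel_measurable \<nu>"
    by measurable
  with assms show ?thesis unfolding L1loc_conv_def by simp
qed

lemma total_variation_add_const_le: "total_variation \<nu> U (\<lambda>x. u x + c) \<le> total_variation \<nu> U u"
  unfolding total_variation_def
proof (rule INF_mono)
  fix f assume "f \<in> {f. (\<forall>i. loc_lipschitz_on U (f i)) \<and> L1loc_conv \<nu> U f u}"
  then have "(\<lambda>i x. f i x + c) \<in> {f. (\<forall>i. loc_lipschitz_on U (f i)) \<and> L1loc_conv \<nu> U f (\<lambda>x. u x + c)}"
    by (simp add: loc_lipschitz_on_add_const L1loc_conv_add_const)
  then show "\<exists>g\<in>{f. (\<forall>i. loc_lipschitz_on U (f i)) \<and> L1loc_conv \<nu> U f (\<lambda>x. u x + c)}.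
      liminf (\<lambda>i. \<integral>\<^sup>+x\<in>U. slope (g i) x \<partial>\<nu>) \<le> liminf (\<lambda>i. \<integral>\<^sup>+x\<in>U. slope (f i) x \<partial>\<nu>)"
    by (auto simp: slope_add_const)
qed

lemma total_variation_add_const: "total_variation \<nu> U (\<lambda>x. u x + c) = total_variation \<nu> U u"
proof (rule antisym)
  show "total_variation \<nu> U (\<lambda>x. u x + c) \<le> total_variation \<nu> U u"
    by (rule total_variation_add_const_le)
  show "total_variation \<nu> U u \<le> total_variation \<nu> U (\<lambda>x. u x + c)"
    using total_variation_add_const_le[of \<nu> U "\<lambda>x. u x + c" "- c"] by simp
qed

lemma slope_const: "slope (\<lambda>x. c) x = 0"
proof -
  have "Limsup (at x) (\<lambda>y. 0::ennreal) \<le> 0" by (rule Limsup_bounded) simp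
  then show ?thesis unfolding slope_def by simp
qed

lemma total_variation_const:
  assumes "open U"
  shows "total_variation \<nu> U (\<lambda>x. c) = 0"
proof -
  have balls: "\<exists>r>0. ball x r \<subseteq> U" if "x \<in> U" for x
    using assms that open_contains_ball by blast
  have "loc_lipschitz_on U (\<lambda>x. c)"
    unfolding loc_lipschitz_on_def
  proof
    fix x assume "x \<in> U"
    with balls obtain r where "r > 0" "ball x r \<subseteq> U" by blast
    then show "\<exists>r>0. ball x r \<subseteq> U \<and> (\<exists>L. \<forall>y\<in>ball x r. \<forall>z\<in>ball x r. \<bar>c - c\<bar> \<le> L * dist y z)"
      by (intro exI[of _ r] conjI exI[of _ 0]) auto
  qed
  moreover have "L1loc_conv \<nu> U (\<lambda>i x. c) (\<lambda>x. c)"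
    unfolding L1loc_conv_def using balls by simp
  ultimately have "total_variation \<nu> U (\<lambda>x. c) \<le> liminf (\<lambda>i. \<integral>\<^sup>+x\<in>U. slope (\<lambda>x. c) x \<partial>\<nu>)"
    unfolding total_variation_def by (intro INF_lower) simp
  then show ?thesis by (simp add: slope_const Liminf_const)
qed

context L2_domain
begin

lemma memL1_add_const_iff: "memL1 \<nu> \<Omega> (\<lambda>x. f x + c) \<longleftrightarrow> memL1 \<nu> \<Omega> f"
proof
  assume "memL1 \<nu> \<Omega> (\<lambda>x. f x + c)"
  then have "(\<lambda>x. f x + c) \<in> borel_measurable \<nu>" "integrable M (\<lambda>x. f x + c)"
    by (auto simp: memL1_iff)
  then have "(\<lambda>x. (f x + c) - c) \<in> borel_measurable \<nu>" "integrable M (\<lambda>x. (f x + c) - c)"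
    by (measurable, intro Bochner_Integration.integrable_diff) auto
  then show "memL1 \<nu> \<Omega> f" unfolding memL1_iff by simp
next
  assume "memL1 \<nu> \<Omega> f"
  then have "f \<in> borel_measurable \<nu>" "integrable M f" by (auto simp: memL1_iff)
  then have "(\<lambda>x. f x + c) \<in> borel_measurable \<nu>" "integrable M (\<lambda>x. f x + c)" by auto
  then show "memL1 \<nu> \<Omega> (\<lambda>x. f x + c)" unfolding memL1_iff by simp
qed

lemma TVN_add_const: "TVN \<nu> \<Omega> (\<lambda>x. f x + c) = TVN \<nu> \<Omega> f"
  by (simp add: TVN_def memBV_def memL1_add_const_iff memL2_add_const_iff total_variation_add_const)

lemma TVN_const: "TVN \<nu> \<Omega> (\<lambda>x. c) = 0"
  using open_domain by (simp add: TVN_def memBV_def memL1_iff memL2_const total_variation_const)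

lemma subdiff_TVN_D:
  assumes "(\<lambda>x. - v x) \<in> subdiff_TVN \<nu> \<Omega> U"
  shows "memL2 \<nu> \<Omega> U" "memL2 \<nu> \<Omega> v" "TVN \<nu> \<Omega> U \<noteq> \<infinity>"
    "\<And>w. memL2 \<nu> \<Omega> w \<Longrightarrow>
       enn2ereal (TVN \<nu> \<Omega> U) + ereal (integral\<^sup>L M (\<lambda>x. - v x * (w x - U x))) \<le> enn2ereal (TVN \<nu> \<Omega> w)"
  using assms by (auto simp: subdiff_TVN_def set_integral_eq memL2_uminus_iff)

lemma subgradient_integral_zero:
  assumes "(\<lambda>x. - v x) \<in> subdiff_TVN \<nu> \<Omega> U"
  shows "integral\<^sup>L M v = 0"
proof -
  note sd = subdiff_TVN_D[OF assms]
  obtain r where r: "TVN \<nu> \<Omega> U = ennreal r" "0 \<le> r" using sd(3) by (cases "TVN \<nu> \<Omega> U") auto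
  have "0 \<le> c * integral\<^sup>L M v" for c
  proof -
    have "enn2ereal (TVN \<nu> \<Omega> U) + ereal (integral\<^sup>L M (\<lambda>x. - v x * ((U x + c) - U x)))
        \<le> enn2ereal (TVN \<nu> \<Omega> (\<lambda>x. U x + c))"
      by (rule sd(4)) (simp add: memL2_add_const_iff sd(1))
    then show ?thesis using r by (simp add: TVN_add_const mult.commute)
  qed
  from this[of 1] this[of "-1"] show ?thesis by simp
qed

lemma subgradient_inner_le:
  assumes "(\<lambda>x. - v x) \<in> subdiff_TVN \<nu> \<Omega> U"
  shows "integral\<^sup>L M (\<lambda>x. (U x - c) * v x) \<le> - enn2real (TVN \<nu> \<Omega> U)"
proof -
  note sd = subdiff_TVN_D[OF assms]
  obtain r where r: "TVN \<nu> \<Omega> U = ennreal r" "0 \<le> r" using sd(3) by (cases "TVN \<nu> \<Omega> U") auto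
  have "enn2ereal (TVN \<nu> \<Omega> U) + ereal (integral\<^sup>L M (\<lambda>x. - v x * (c - U x)))
      \<le> enn2ereal (TVN \<nu> \<Omega> (\<lambda>x. c))"
    by (rule sd(4)) (rule memL2_const)
  moreover have "integral\<^sup>L M (\<lambda>x. - v x * (c - U x)) = integral\<^sup>L M (\<lambda>x. (U x - c) * v x)"
    by (rule arg_cong[where f = "integral\<^sup>L M"]) (auto simp: algebra_simps)
  ultimately have "ereal r + ereal (integral\<^sup>L M (\<lambda>x. (U x - c) * v x)) \<le> 0"
    using r by (simp add: TVN_const zero_ennreal.rep_eq)
  then show ?thesis using r by simp
qed

lemma TVN_ge_lambda1:
  assumes "ennreal L \<le> lambda1_TVN \<nu> \<Omega>" "0 \<le> L" "memL2 \<nu> \<Omega> w" "integral\<^sup>L M w = 0"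
  shows "ennreal (L * l2norm \<nu> \<Omega> w) \<le> TVN \<nu> \<Omega> w"
proof (cases "l2norm \<nu> \<Omega> w = 0")
  case False
  then have pos: "l2norm \<nu> \<Omega> w > 0" using l2norm_nonneg[of \<nu> \<Omega> w] by simp
  have "lambda1_TVN \<nu> \<Omega> \<le> TVN \<nu> \<Omega> w / ennreal (l2norm \<nu> \<Omega> w)"
    unfolding lambda1_TVN_def by (rule INF_lower) (use assms(3,4) False in \<open>simp add: set_integral_eq\<close>)
  with assms(1) have le: "ennreal L \<le> TVN \<nu> \<Omega> w / ennreal (l2norm \<nu> \<Omega> w)" by simp
  show ?thesis
  proof (rule ccontr)
    assume "\<not> ?thesis"
    then have "TVN \<nu> \<Omega> w < ennreal L * ennreal (l2norm \<nu> \<Omega> w)"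
      using assms(2) l2norm_nonneg[of \<nu> \<Omega> w] by (simp add: ennreal_mult not_le)
    then have "TVN \<nu> \<Omega> w / ennreal (l2norm \<nu> \<Omega> w) < ennreal L"
      using pos by (subst divide_less_ennreal) auto
    with le show False by simp
  qed
qed simp

lemma lambda1_TVN_ge_inverse:
  assumes "C > 0" and poincare: "\<And>w. memBV \<nu> \<Omega> w \<Longrightarrow> memL2 \<nu> \<Omega> w \<Longrightarrow>
    ennreal (l2norm \<nu> \<Omega> (\<lambda>x. w x - mean \<nu> \<Omega> w)) \<le> ennreal C * total_variation \<nu> \<Omega> w"
  shows "ennreal (1 / C) \<le> lambda1_TVN \<nu> \<Omega>"
  unfolding lambda1_TVN_def
proof (rule INF_greatest)
  fix w assume "w \<in> {w. memL2 \<nu> \<Omega> w \<and> l2norm \<nu> \<Omega> w \<noteq> 0 \<and> (\<integral>x\<in>\<Omega>. w x \<partial>\<nu>) = 0}"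
  then have w: "memL2 \<nu> \<Omega> w" "l2norm \<nu> \<Omega> w > 0" "mean \<nu> \<Omega> w = 0"
    using l2norm_nonneg[of \<nu> \<Omega> w] by (auto simp: mean_def)
  show "ennreal (1 / C) \<le> TVN \<nu> \<Omega> w / ennreal (l2norm \<nu> \<Omega> w)"
  proof (cases "TVN \<nu> \<Omega> w = \<infinity>")
    case False
    then have bv: "memBV \<nu> \<Omega> w" and tv: "TVN \<nu> \<Omega> w = total_variation \<nu> \<Omega> w"
      using w(1) by (auto simp: TVN_def split: if_splits)
    with False obtain t where t: "total_variation \<nu> \<Omega> w = ennreal t" "0 \<le> t"
      by (cases "total_variation \<nu> \<Omega> w") auto
    have "ennreal (l2norm \<nu> \<Omega> w) \<le> ennreal (C * t)"
      using poincare[OF bv w(1)] w(3) t \<open>C > 0\<close> by (simp add: ennreal_mult)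
    then have "1 / C \<le> t / l2norm \<nu> \<Omega> w"
      using \<open>C > 0\<close> w(2) t(2) by (simp add: field_simps)
    then show ?thesis using tv t w(2) by (simp add: divide_ennreal ennreal_leI)
  qed (simp add: ennreal_top_divide)
qed

end

section \<open>The Neumann total variation flow\<close>

lemma abs_cont_real_of_L2_bound:
  assumes ac: "abs_cont_L2 \<nu> \<Omega> u T" and "0 \<le> K" "0 \<le> L" "0 \<le> a" "b \<le> T"
    and bound: "\<And>s t. s \<in> {0..T} \<Longrightarrow> t \<in> {0..T} \<Longrightarrow>
       \<bar>F s - F t\<bar> \<le> K * l2norm \<nu> \<Omega> (\<lambda>x. u s x - u t x) + L * \<bar>s - t\<bar>"
  shows "abs_cont_real F a b"
  unfolding abs_cont_real_def
proof (intro allI impI)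
  fix \<epsilon> :: real assume "\<epsilon> > 0"
  then have "\<epsilon> / (2 * (K + 1)) > 0" using \<open>0 \<le> K\<close> by simp
  then obtain \<delta>1 where "\<delta>1 > 0" and small: "\<forall>(n::nat) a b.
        (\<forall>i<n. 0 \<le> a i \<and> a i \<le> b i \<and> b i \<le> T) \<and>
        (\<forall>i<n. \<forall>j<n. i \<noteq> j \<longrightarrow> b i \<le> a j \<or> b j \<le> a i) \<and>
        (\<Sum>i<n. b i - a i) < \<delta>1 \<longrightarrow>
        (\<Sum>i<n. l2norm \<nu> \<Omega> (\<lambda>x. u (b i) x - u (a i) x)) < \<epsilon> / (2 * (K + 1))"
    using ac unfolding abs_cont_L2_def by blast
  define \<delta> where "\<delta> = min \<delta>1 (\<epsilon> / (2 * (L + 1)))"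
  have "\<delta> > 0" using \<open>\<delta>1 > 0\<close> \<open>\<epsilon> > 0\<close> \<open>0 \<le> L\<close> by (simp add: \<delta>_def)
  moreover have "(\<Sum>i<n. \<bar>F (q i) - F (p i)\<bar>) < \<epsilon>"
    if intervals: "\<forall>i<n. a \<le> p i \<and> p i \<le> q i \<and> q i \<le> b"
      and disj: "\<forall>i<n. \<forall>j<n. i \<noteq> j \<longrightarrow> q i \<le> p j \<or> q j \<le> p i"
      and short: "(\<Sum>i<n. q i - p i) < \<delta>" for n :: nat and p q
  proof -
    have in_T: "\<forall>i<n. 0 \<le> p i \<and> p i \<le> q i \<and> q i \<le> T" using intervals assms(4,5) by force
    have L2_small: "(\<Sum>i<n. l2norm \<nu> \<Omega> (\<lambda>x. u (q i) x - u (p i) x)) < \<epsilon> / (2 * (K + 1))"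
      using small in_T disj short by (simp add: \<delta>_def)
    have "(\<Sum>i<n. \<bar>F (q i) - F (p i)\<bar>) \<le>
        (\<Sum>i<n. K * l2norm \<nu> \<Omega> (\<lambda>x. u (q i) x - u (p i) x) + L * (q i - p i))"
    proof (rule sum_mono)
      fix i assume "i \<in> {..<n}"
      with in_T have "p i \<in> {0..T}" "q i \<in> {0..T}" "p i \<le> q i" by auto
      then show "\<bar>F (q i) - F (p i)\<bar> \<le> K * l2norm \<nu> \<Omega> (\<lambda>x. u (q i) x - u (p i) x) + L * (q i - p i)"
        using bound[of "q i" "p i"] by simp
    qed
    also have "\<dots> = K * (\<Sum>i<n. l2norm \<nu> \<Omega> (\<lambda>x. u (q i) x - u (p i) x)) + L * (\<Sum>i<n. q i - p i)"
      by (simp add: sum.distrib sum_distrib_left)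
    also have "\<dots> \<le> K * (\<epsilon> / (2 * (K + 1))) + L * (\<epsilon> / (2 * (L + 1)))"
      using L2_small short \<open>0 \<le> K\<close> \<open>0 \<le> L\<close> by (intro add_mono mult_left_mono) (auto simp: \<delta>_def)
    also have "\<dots> < \<epsilon>"
    proof -
      have "K * (\<epsilon> / (2 * (K + 1))) < \<epsilon> / 2" "L * (\<epsilon> / (2 * (L + 1))) < \<epsilon> / 2"
        using \<open>0 \<le> K\<close> \<open>0 \<le> L\<close> \<open>\<epsilon> > 0\<close> by (simp_all add: field_simps)
      then show ?thesis by linarith
    qed
    finally show ?thesis .
  qed
  ultimately show "\<exists>\<delta>>0. \<forall>(n::nat) p q. (\<forall>i<n. a \<le> p i \<and> p i \<le> q i \<and> q i \<le> b) \<and>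
      (\<forall>i<n. \<forall>j<n. i \<noteq> j \<longrightarrow> q i \<le> p j \<or> q j \<le> p i) \<and> (\<Sum>i<n. q i - p i) < \<delta> \<longrightarrow>
      (\<Sum>i<n. \<bar>F (q i) - F (p i)\<bar>) < \<epsilon>" by blast
qed

lemma le_tangent_of_square_le:
  fixes X Y \<phi> :: real
  assumes "0 < \<phi>" "X\<^sup>2 \<le> Y"
  shows "X \<le> (Y + \<phi>\<^sup>2) / (2 * \<phi>)"
proof -
  have "2 * \<phi> * X \<le> X\<^sup>2 + \<phi>\<^sup>2"
    using zero_le_power2[of "X - \<phi>"] by (simp add: power2_eq_square algebra_simps)
  with assms show ?thesis by (simp add: field_simps)
qed

lemma tangent_step_bound:
  fixes X \<phi> h lam e B \<epsilon> :: real
  assumes "0 < \<phi>" "0 < h" "e < \<epsilon> / 2" "h * B < \<epsilon> * \<phi>"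
    and "X\<^sup>2 \<le> \<phi>\<^sup>2 - 2 * h * lam * \<phi> + 2 * h * \<phi> * e + h\<^sup>2 * B"
  shows "X + lam * h - \<phi> \<le> \<epsilon> * h"
proof -
  have "X \<le> (\<phi>\<^sup>2 - 2 * h * lam * \<phi> + 2 * h * \<phi> * e + h\<^sup>2 * B + \<phi>\<^sup>2) / (2 * \<phi>)"
    using assms(1,5) by (rule le_tangent_of_square_le)
  also have "\<dots> = \<phi> - lam * h + h * e + h * (h * B / (2 * \<phi>))"
    using assms(1) by (simp add: field_simps power2_eq_square)
  also have "h * (h * B / (2 * \<phi>)) \<le> h * (\<epsilon> / 2)"
    using assms(1,2,4) by (intro mult_left_mono) (auto simp: field_simps)
  also have "h * e \<le> h * (\<epsilon> / 2)"
    using assms(2,3) by simp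
  finally show ?thesis by (simp add: algebra_simps)
qed

locale TV_flow = L2_domain +
  fixes u0 :: "'a \<Rightarrow> real" and u :: "real \<Rightarrow> 'a \<Rightarrow> real"
  assumes solution: "TV_Neumann_solution \<nu> \<Omega> u0 u"
    and initial_L2: "memL2 \<nu> \<Omega> u0"
    and positive_measure: "0 < measure \<nu> \<Omega>"
begin

lemma memL2_solution: "0 \<le> t \<Longrightarrow> memL2 \<nu> \<Omega> (u t)"
  using solution by (simp add: TV_Neumann_solution_def)

lemma solution_initial: "AE x in \<nu>. x \<in> \<Omega> \<longrightarrow> u 0 x = u0 x"
  using solution by (simp add: TV_Neumann_solution_def)

lemma abs_cont_solution: "0 < T \<Longrightarrow> abs_cont_L2 \<nu> \<Omega> u T"
  using solution by (simp add: TV_Neumann_solution_def)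

lemma AE_solution_property:
  assumes "0 \<le> a" and property: "\<And>s v. a < s \<Longrightarrow> s < b \<Longrightarrow> has_L2_deriv \<nu> \<Omega> u v s \<Longrightarrow>
    (\<lambda>x. - v x) \<in> subdiff_TVN \<nu> \<Omega> (u s) \<Longrightarrow> Q s"
  shows "AE s in lborel. a < s \<and> s < b \<longrightarrow> Q s"
proof -
  have "0 < \<bar>b\<bar> + 1" by simp
  with solution have "AE s in lborel. 0 < s \<and> s < \<bar>b\<bar> + 1 \<longrightarrow>
      (\<exists>v. has_L2_deriv \<nu> \<Omega> u v s \<and> (\<lambda>x. - v x) \<in> subdiff_TVN \<nu> \<Omega> (u s))"
    by (simp add: TV_Neumann_solution_def)
  then show ?thesis
  proof (rule eventually_mono, intro impI)
    fix s assume "0 < s \<and> s < \<bar>b\<bar> + 1 \<longrightarrow>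
        (\<exists>v. has_L2_deriv \<nu> \<Omega> u v s \<and> (\<lambda>x. - v x) \<in> subdiff_TVN \<nu> \<Omega> (u s))"
      and s: "a < s \<and> s < b"
    with \<open>0 \<le> a\<close> obtain v where "has_L2_deriv \<nu> \<Omega> u v s" "(\<lambda>x. - v x) \<in> subdiff_TVN \<nu> \<Omega> (u s)"
      by auto
    with s show "Q s" by (intro property) auto
  qed
qed

lemma mass_dini:
  assumes "0 < s" "has_L2_deriv \<nu> \<Omega> u v s" "(\<lambda>x. - v x) \<in> subdiff_TVN \<nu> \<Omega> (u s)"
  shows "dini_upper_right_nonpos (\<lambda>t. integral\<^sup>L M (u t)) s"
    "dini_upper_right_nonpos (\<lambda>t. - integral\<^sup>L M (u t)) s"
proof -
  have "\<exists>\<eta>>0. \<forall>h. 0 < h \<and> h < \<eta> \<longrightarrow> \<bar>integral\<^sup>L M (u (s + h)) - integral\<^sup>L M (u s)\<bar> \<le> \<epsilon> * h"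
    if "\<epsilon> > 0" for \<epsilon>
  proof -
    define N where "N = l2norm \<nu> \<Omega> (\<lambda>x. 1)"
    have "0 \<le> N" by (simp add: N_def l2norm_nonneg)
    have v: "memL2 \<nu> \<Omega> v" using assms(2) by (simp add: has_L2_deriv_def)
    have us: "memL2 \<nu> \<Omega> (u s)" "\<And>h. 0 < h \<Longrightarrow> memL2 \<nu> \<Omega> (u (s + h))"
      using assms(1) by (simp_all add: memL2_solution)
    obtain \<eta> where "\<eta> > 0" and rem: "\<And>h. 0 < h \<Longrightarrow> h < \<eta> \<Longrightarrow>
        memL2 \<nu> \<Omega> (\<lambda>x. (u (s + h) x - u s x) / h - v x) \<and>
        l2norm \<nu> \<Omega> (\<lambda>x. (u (s + h) x - u s x) / h - v x) < \<epsilon> / (N + 1)"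
      using difference_quotient_remainder[OF assms(2) us, of "\<epsilon> / (N + 1)"] \<open>\<epsilon> > 0\<close> \<open>0 \<le> N\<close> by auto
    have "\<bar>integral\<^sup>L M (u (s + h)) - integral\<^sup>L M (u s)\<bar> \<le> \<epsilon> * h" if h: "0 < h" "h < \<eta>" for h
    proof -
      define d where "d = (\<lambda>x. (u (s + h) x - u s x) / h - v x)"
      have d: "memL2 \<nu> \<Omega> d" "l2norm \<nu> \<Omega> d < \<epsilon> / (N + 1)" using rem[OF h] by (simp_all add: d_def)
      have "u (s + h) = (\<lambda>x. u s x + h * v x + h * d x)" using h by (auto simp: d_def field_simps)
      then have "integral\<^sup>L M (u (s + h)) - integral\<^sup>L M (u s) = h * integral\<^sup>L M d"
        using memL2_integrable[OF us(1)] memL2_integrable[OF v] memL2_integrable[OF d(1)]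
          subgradient_integral_zero[OF assms(3)] by simp
      also have "\<bar>\<dots>\<bar> \<le> h * (N * l2norm \<nu> \<Omega> d)"
        using abs_integral_le_l2norm[OF d(1)] h by (simp add: abs_mult N_def)
      also have "\<dots> \<le> h * \<epsilon>"
      proof -
        have "N * l2norm \<nu> \<Omega> d \<le> N * (\<epsilon> / (N + 1))"
          using d(2) \<open>0 \<le> N\<close> by (intro mult_left_mono) auto
        also have "\<dots> \<le> \<epsilon>" using \<open>0 \<le> N\<close> \<open>\<epsilon> > 0\<close> by (simp add: field_simps)
        finally show ?thesis using h by simp
      qed
      finally show ?thesis by (simp add: mult.commute)
    qed
    with \<open>\<eta> > 0\<close> show ?thesis by blast
  qed
  from dini_upper_right_nonpos_of_abs_bound[where f = "\<lambda>t. integral\<^sup>L M (u t)", OF this]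
  show "dini_upper_right_nonpos (\<lambda>t. integral\<^sup>L M (u t)) s"
    "dini_upper_right_nonpos (\<lambda>t. - integral\<^sup>L M (u t)) s" by simp_all
qed

lemma mass_conserved:
  assumes "0 \<le> t"
  shows "integral\<^sup>L M (u t) = integral\<^sup>L M u0"
proof -
  define F where "F s = integral\<^sup>L M (u s)" for s
  have "F 0 = integral\<^sup>L M u0"
    unfolding F_def
  proof (rule integral_cong_AE)
    show "u 0 \<in> borel_measurable M" "u0 \<in> borel_measurable M"
      using memL2_solution[of 0] initial_L2 by (auto simp: memL2_def intro: measurable_M)
    show "AE x in M. u 0 x = u0 x"
      using solution_initial by (simp add: AE_restrict_space_iff[OF domain_sets_Int_space])
  qed
  moreover have "F t = F 0" if "0 < t"
  proof -
    have bound: "\<bar>F s - F s'\<bar> \<le> l2norm \<nu> \<Omega> (\<lambda>x. 1) * l2norm \<nu> \<Omega> (\<lambda>x. u s x - u s' x) + 0 * \<bar>s - s'\<bar>"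
      if "s \<in> {0..t}" "s' \<in> {0..t}" for s s'
    proof -
      have L2: "memL2 \<nu> \<Omega> (u s)" "memL2 \<nu> \<Omega> (u s')" using that memL2_solution by auto
      then have "F s - F s' = integral\<^sup>L M (\<lambda>x. u s x - u s' x)"
        unfolding F_def by (simp add: memL2_integrable)
      with abs_integral_le_l2norm[OF memL2_diff[OF L2]] show ?thesis by simp
    qed
    have ac: "abs_cont_real F 0 t" "abs_cont_real (\<lambda>s. - F s) 0 t"
      using abs_cont_real_of_L2_bound[OF abs_cont_solution[OF \<open>0 < t\<close>] _ _ _ _ bound]
      by (simp_all add: l2norm_nonneg abs_cont_real_uminus)
    have "AE s in lborel. 0 < s \<and> s < t \<longrightarrow> dini_upper_right_nonpos F s"
      unfolding F_def by (rule AE_solution_property[OF order_refl]) (rule mass_dini(1))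
    from abs_cont_real_decreasing[OF ac(1) _ this] \<open>0 < t\<close> have "F t \<le> F 0" by simp
    have "AE s in lborel. 0 < s \<and> s < t \<longrightarrow> dini_upper_right_nonpos (\<lambda>s. - F s) s"
      unfolding F_def by (rule AE_solution_property[OF order_refl]) (rule mass_dini(2))
    from abs_cont_real_decreasing[OF ac(2) _ this] \<open>0 < t\<close> have "- F t \<le> - F 0" by simp
    with \<open>F t \<le> F 0\<close> show ?thesis by simp
  qed
  ultimately show ?thesis using assms by (cases "t = 0") (auto simp: F_def)
qed

definition mean_distance :: "real \<Rightarrow> real" where
  "mean_distance t = l2norm \<nu> \<Omega> (\<lambda>x. u t x - mean \<nu> \<Omega> u0)"

lemma mean_distance_nonneg: "0 \<le> mean_distance t"
  by (simp add: mean_distance_def l2norm_nonneg)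

lemma memL2_solution_minus_mean: "0 \<le> t \<Longrightarrow> memL2 \<nu> \<Omega> (\<lambda>x. u t x - mean \<nu> \<Omega> u0)"
  by (simp add: memL2_diff memL2_solution memL2_const)

lemma integral_solution_minus_mean:
  assumes "0 \<le> t"
  shows "integral\<^sup>L M (\<lambda>x. u t x - mean \<nu> \<Omega> u0) = 0"
proof -
  have "integral\<^sup>L M (\<lambda>x. u t x - mean \<nu> \<Omega> u0) = integral\<^sup>L M u0 - mean \<nu> \<Omega> u0 * measure \<nu> \<Omega>"
    using memL2_integrable[OF memL2_solution[OF assms]] mass_conserved[OF assms] integral_one by simp
  also have "\<dots> = 0"
    using positive_measure by (simp add: mean_def set_integral_eq)
  finally show ?thesis .
qed

lemma mean_distance_lipschitz:
  assumes "0 \<le> s" "0 \<le> t"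
  shows "\<bar>mean_distance s - mean_distance t\<bar> \<le> l2norm \<nu> \<Omega> (\<lambda>x. u s x - u t x)"
proof -
  have "mean_distance s \<le> mean_distance t + l2norm \<nu> \<Omega> (\<lambda>x. u s x - u t x)"
    if "0 \<le> s" "0 \<le> t" for s t
  proof -
    have "mean_distance s = l2norm \<nu> \<Omega> (\<lambda>x. (u t x - mean \<nu> \<Omega> u0) + (u s x - u t x))"
      by (simp add: mean_distance_def)
    also have "\<dots> \<le> mean_distance t + l2norm \<nu> \<Omega> (\<lambda>x. u s x - u t x)"
      unfolding mean_distance_def using that
      by (intro l2norm_triangle memL2_solution_minus_mean memL2_diff memL2_solution)
    finally show ?thesis .
  qed
  from this[OF assms] this[OF assms(2,1)] show ?thesis
    by (simp add: l2norm_minus_commute[of \<nu> \<Omega> "u t"])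
qed

lemma abs_cont_mean_distance_plus:
  assumes "0 \<le> lam" "0 \<le> a" "0 < T" "b \<le> T"
  shows "abs_cont_real (\<lambda>t. mean_distance t + lam * t) a b"
proof (rule abs_cont_real_of_L2_bound[OF abs_cont_solution[OF assms(3)], of 1 lam])
  fix s t assume "s \<in> {0..T}" "t \<in> {0..T}"
  then have "\<bar>mean_distance s - mean_distance t\<bar> \<le> l2norm \<nu> \<Omega> (\<lambda>x. u s x - u t x)"
    by (intro mean_distance_lipschitz) auto
  moreover have "\<bar>lam * s - lam * t\<bar> = lam * \<bar>s - t\<bar>"
    using assms(1) by (simp add: right_diff_distrib[symmetric] abs_mult)
  ultimately show "\<bar>(mean_distance s + lam * s) - (mean_distance t + lam * t)\<bar>
      \<le> 1 * l2norm \<nu> \<Omega> (\<lambda>x. u s x - u t x) + lam * \<bar>s - t\<bar>" by linarith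
qed (use assms in auto)

lemma inner_derivative_le:
  assumes "ennreal lam \<le> lambda1_TVN \<nu> \<Omega>" "0 \<le> lam" "0 < s"
    and "(\<lambda>x. - v x) \<in> subdiff_TVN \<nu> \<Omega> (u s)"
  shows "integral\<^sup>L M (\<lambda>x. (u s x - mean \<nu> \<Omega> u0) * v x) \<le> - lam * mean_distance s"
proof -
  have "ennreal (lam * mean_distance s) \<le> TVN \<nu> \<Omega> (\<lambda>x. u s x - mean \<nu> \<Omega> u0)"
    unfolding mean_distance_def using assms(1-3)
    by (intro TVN_ge_lambda1 memL2_solution_minus_mean integral_solution_minus_mean) auto
  also have "\<dots> = TVN \<nu> \<Omega> (u s)"
    using TVN_add_const[of "u s" "- mean \<nu> \<Omega> u0"] by simp
  finally have "lam * mean_distance s \<le> enn2real (TVN \<nu> \<Omega> (u s))"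
    using subdiff_TVN_D(3)[OF assms(4)] by (cases "TVN \<nu> \<Omega> (u s)") auto
  with subgradient_inner_le[OF assms(4), of "mean \<nu> \<Omega> u0"] show ?thesis by linarith
qed

lemma mean_distance_step_square:
  assumes "ennreal lam \<le> lambda1_TVN \<nu> \<Omega>" "0 \<le> lam" "0 < s" "0 < h" "memL2 \<nu> \<Omega> v"
    and subgrad: "(\<lambda>x. - v x) \<in> subdiff_TVN \<nu> \<Omega> (u s)"
    and d: "memL2 \<nu> \<Omega> d" "l2norm \<nu> \<Omega> d \<le> 1"
    and step: "\<And>x. u (s + h) x = u s x + h * (v x + d x)"
  shows "(mean_distance (s + h))\<^sup>2 \<le> (mean_distance s)\<^sup>2 - 2 * h * lam * mean_distance s
    + 2 * h * mean_distance s * l2norm \<nu> \<Omega> d + h\<^sup>2 * (l2norm \<nu> \<Omega> v + 1)\<^sup>2"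
proof -
  define W where "W = (\<lambda>x. u s x - mean \<nu> \<Omega> u0)"
  have W: "memL2 \<nu> \<Omega> W" using \<open>0 < s\<close> by (simp add: W_def memL2_solution_minus_mean)
  have vd: "memL2 \<nu> \<Omega> (\<lambda>x. v x + d x)" using memL2_lin[OF assms(5) d(1), of 1 1] by simp
  have "(mean_distance (s + h))\<^sup>2 = (l2norm \<nu> \<Omega> (\<lambda>x. W x + h * (v x + d x)))\<^sup>2"
    unfolding mean_distance_def W_def step by (simp add: algebra_simps)
  also have "\<dots> = (mean_distance s)\<^sup>2 + 2 * h * integral\<^sup>L M (\<lambda>x. W x * (v x + d x))
      + h\<^sup>2 * (l2norm \<nu> \<Omega> (\<lambda>x. v x + d x))\<^sup>2"
    using l2norm_add_scaled_square[OF W vd] by (simp add: mean_distance_def W_def)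
  also have "integral\<^sup>L M (\<lambda>x. W x * (v x + d x)) =
      integral\<^sup>L M (\<lambda>x. W x * v x) + integral\<^sup>L M (\<lambda>x. W x * d x)"
    using memL2_integrable_mult[OF W assms(5)] memL2_integrable_mult[OF W d(1)]
    by (simp add: distrib_left)
  also have "\<dots> \<le> - lam * mean_distance s + mean_distance s * l2norm \<nu> \<Omega> d"
    using inner_derivative_le[OF assms(1-3) subgrad] abs_le_D1[OF cauchy_schwarz[OF W d(1)]]
    by (simp add: mean_distance_def W_def)
  also have "(l2norm \<nu> \<Omega> (\<lambda>x. v x + d x))\<^sup>2 \<le> (l2norm \<nu> \<Omega> v + 1)\<^sup>2"
    using l2norm_triangle[OF assms(5) d(1)] d(2) by (simp add: l2norm_nonneg power_mono)
  finally show ?thesis using \<open>0 < h\<close> by (simp add: algebra_simps mult_left_mono)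
qed

lemma mean_distance_dini:
  assumes "ennreal lam \<le> lambda1_TVN \<nu> \<Omega>" "0 \<le> lam" "0 < s"
    and deriv: "has_L2_deriv \<nu> \<Omega> u v s" and subgrad: "(\<lambda>x. - v x) \<in> subdiff_TVN \<nu> \<Omega> (u s)"
    and "0 < mean_distance s"
  shows "dini_upper_right_nonpos (\<lambda>t. mean_distance t + lam * t) s"
  unfolding dini_upper_right_nonpos_def
proof (intro allI impI)
  fix \<epsilon> :: real assume "\<epsilon> > 0"
  define B where "B = (l2norm \<nu> \<Omega> v + 1)\<^sup>2"
  have v: "memL2 \<nu> \<Omega> v" using deriv by (simp add: has_L2_deriv_def)
  have "0 < B" using l2norm_nonneg[of \<nu> \<Omega> v] by (simp add: B_def)
  obtain \<eta> where "\<eta> > 0" and rem: "\<And>h. 0 < h \<Longrightarrow> h < \<eta> \<Longrightarrow>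
      memL2 \<nu> \<Omega> (\<lambda>x. (u (s + h) x - u s x) / h - v x) \<and>
      l2norm \<nu> \<Omega> (\<lambda>x. (u (s + h) x - u s x) / h - v x) < min 1 (\<epsilon> / 2)"
    using difference_quotient_remainder[OF deriv, of "min 1 (\<epsilon> / 2)"] \<open>0 < s\<close> \<open>\<epsilon> > 0\<close>
    by (auto simp: memL2_solution)
  have "mean_distance (s + h) + lam * h - mean_distance s \<le> \<epsilon> * h"
    if h: "0 < h" "h < min \<eta> (\<epsilon> * mean_distance s / B)" for h
  proof (rule tangent_step_bound)
    define d where "d = (\<lambda>x. (u (s + h) x - u s x) / h - v x)"
    have d: "memL2 \<nu> \<Omega> d" "l2norm \<nu> \<Omega> d < 1" "l2norm \<nu> \<Omega> d < \<epsilon> / 2"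
      using rem[of h] h by (simp_all add: d_def)
    have "u (s + h) x = u s x + h * (v x + d x)" for x using h by (simp add: d_def field_simps)
    with assms(1-3) h(1) v subgrad d(1,2) show "(mean_distance (s + h))\<^sup>2 \<le> (mean_distance s)\<^sup>2
        - 2 * h * lam * mean_distance s + 2 * h * mean_distance s * l2norm \<nu> \<Omega> d + h\<^sup>2 * B"
      unfolding B_def by (intro mean_distance_step_square) auto
    show "l2norm \<nu> \<Omega> d < \<epsilon> / 2" by (rule d(3))
    show "h * B < \<epsilon> * mean_distance s" using h \<open>0 < B\<close> by (simp add: field_simps)
  qed (use h \<open>0 < mean_distance s\<close> in auto)
  moreover have "0 < min \<eta> (\<epsilon> * mean_distance s / B)"
    using \<open>\<eta> > 0\<close> \<open>\<epsilon> > 0\<close> \<open>0 < mean_distance s\<close> \<open>0 < B\<close> by simp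
  ultimately show "\<exists>\<eta>>0. \<forall>h. 0 < h \<and> h < \<eta> \<longrightarrow>
      mean_distance (s + h) + lam * (s + h) - (mean_distance s + lam * s) \<le> \<epsilon> * h"
    by (intro exI[of _ "min \<eta> (\<epsilon> * mean_distance s / B)"]) (simp add: algebra_simps)
qed

lemma mean_distance_decay:
  assumes "ennreal lam \<le> lambda1_TVN \<nu> \<Omega>" "0 \<le> lam" "0 \<le> a" "a \<le> b"
    and positive: "\<forall>s\<in>{a..b}. 0 < mean_distance s"
  shows "mean_distance b + lam * b \<le> mean_distance a + lam * a"
proof (rule abs_cont_real_decreasing[where f = "\<lambda>t. mean_distance t + lam * t"])
  show "abs_cont_real (\<lambda>t. mean_distance t + lam * t) a b"
    using assms(2-4) by (intro abs_cont_mean_distance_plus[of lam a "b + 1"]) auto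
  show "AE s in lborel. a < s \<and> s < b \<longrightarrow> dini_upper_right_nonpos (\<lambda>t. mean_distance t + lam * t) s"
    using assms(1-3) positive by (intro AE_solution_property mean_distance_dini) auto
qed (rule assms(4))

lemma mean_distance_initial: "mean_distance 0 \<le> l2norm \<nu> \<Omega> u0"
proof (rule power2_le_imp_le)
  define c where "c = mean \<nu> \<Omega> u0"
  have "mean_distance 0 = l2norm \<nu> \<Omega> (\<lambda>x. u0 x + (- c) * 1)"
    unfolding mean_distance_def c_def using solution_initial
    by (intro l2norm_cong_AE) (auto elim!: eventually_mono)
  then have "(mean_distance 0)\<^sup>2 =
      (l2norm \<nu> \<Omega> u0)\<^sup>2 - 2 * c * integral\<^sup>L M u0 + c\<^sup>2 * (l2norm \<nu> \<Omega> (\<lambda>x. 1))\<^sup>2"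
    using l2norm_add_scaled_square[OF initial_L2 memL2_const, of "- c" 1] by simp
  also have "(l2norm \<nu> \<Omega> (\<lambda>x. 1))\<^sup>2 = measure \<nu> \<Omega>"
    using l2norm_square[OF memL2_const, of 1] integral_one by simp
  also have "integral\<^sup>L M u0 = c * measure \<nu> \<Omega>"
    using positive_measure by (simp add: c_def mean_def set_integral_eq)
  finally have "(mean_distance 0)\<^sup>2 = (l2norm \<nu> \<Omega> u0)\<^sup>2 - c\<^sup>2 * measure \<nu> \<Omega>"
    by (simp add: power2_eq_square algebra_simps)
  then show "(mean_distance 0)\<^sup>2 \<le> (l2norm \<nu> \<Omega> u0)\<^sup>2" using positive_measure by simp
qed (rule l2norm_nonneg)

lemma positive_mean_distance_time_bound:
  assumes "ennreal lam \<le> lambda1_TVN \<nu> \<Omega>" "0 \<le> lam" "0 \<le> t" "0 < mean_distance t"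
  shows "lam * t < mean_distance 0"
proof (rule time_bound_while_positive[where \<psi> = mean_distance, OF _ mean_distance_nonneg assms(2-4)])
  have "abs_cont_real (\<lambda>t. mean_distance t + 0 * t) 0 t"
    using assms(3) by (intro abs_cont_mean_distance_plus[of 0 0 "t + 1"]) auto
  then show "continuous_on {0..t} mean_distance" by (simp add: abs_cont_real_imp_continuous_on)
qed (use assms(1,2) in \<open>auto intro: mean_distance_decay\<close>)

lemma extinction_time_le:
  assumes "ennreal lam \<le> lambda1_TVN \<nu> \<Omega>" "0 < lam"
  shows "extinction_time \<nu> \<Omega> u0 u \<le> ennreal (l2norm \<nu> \<Omega> u0 / lam)"
proof -
  have extinct: "AE x in \<nu>. x \<in> \<Omega> \<longrightarrow> u t x = mean \<nu> \<Omega> u0"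
    if "mean_distance 0 / lam < t" for t
  proof -
    have "0 \<le> mean_distance 0 / lam" using assms(2) mean_distance_nonneg[of 0] by simp
    with that have "0 < t" by linarith
    have "mean_distance t = 0"
    proof (rule ccontr)
      assume "mean_distance t \<noteq> 0"
      with mean_distance_nonneg[of t] have "0 < mean_distance t" by simp
      with assms \<open>0 < t\<close> have "lam * t < mean_distance 0"
        by (intro positive_mean_distance_time_bound) auto
      with that assms(2) show False by (simp add: field_simps)
    qed
    then have "AE x in \<nu>. x \<in> \<Omega> \<longrightarrow> u t x - mean \<nu> \<Omega> u0 = 0"
      using \<open>0 < t\<close> by (intro l2norm_eq_0_imp_AE memL2_solution_minus_mean) (auto simp: mean_distance_def)
    then show ?thesis by (auto elim: eventually_mono)
  qed
  have "extinction_time \<nu> \<Omega> u0 u \<le> ennreal (mean_distance 0 / lam)"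
  proof (rule ennreal_le_epsilon)
    fix e :: real assume "0 < e"
    define T where "T = mean_distance 0 / lam + e"
    have "0 \<le> mean_distance 0 / lam" using assms(2) mean_distance_nonneg[of 0] by simp
    with \<open>0 < e\<close> have "0 < T" by (simp add: T_def)
    with extinct have "extinction_time \<nu> \<Omega> u0 u \<le> ennreal T"
      unfolding extinction_time_def using \<open>0 < e\<close> by (intro Inf_lower) (auto simp: T_def)
    also have "\<dots> = ennreal (mean_distance 0 / lam) + ennreal e"
      using \<open>0 < e\<close> assms(2) mean_distance_nonneg[of 0] by (simp add: T_def ennreal_plus)
    finally show "extinction_time \<nu> \<Omega> u0 u \<le> ennreal (mean_distance 0 / lam) + ennreal e" .
  qed
  also have "\<dots> \<le> ennreal (l2norm \<nu> \<Omega> u0 / lam)"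
    using mean_distance_initial assms(2) by (intro ennreal_leI divide_right_mono) auto
  finally show ?thesis .
qed

end

lemma ennreal_le_divide_of_real_bounds:
  fixes x \<Lambda> :: ennreal
  assumes "0 < \<Lambda>" "0 \<le> a" and bound: "\<And>L. 0 < L \<Longrightarrow> ennreal L \<le> \<Lambda> \<Longrightarrow> x \<le> ennreal (a / L)"
  shows "x \<le> ennreal a / \<Lambda>"
proof (cases "\<Lambda> = \<infinity>")
  case True
  have "x \<le> 0 + ennreal e" if "0 < e" for e
  proof -
    have "x \<le> ennreal (a / ((a + 1) / e))" using bound[of "(a + 1) / e"] True \<open>0 \<le> a\<close> that by simp
    also have "\<dots> \<le> ennreal e" using \<open>0 \<le> a\<close> that by (intro ennreal_leI) (simp add: field_simps)
    finally show ?thesis by simp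
  qed
  then show ?thesis by (metis ennreal_le_epsilon le_zero_eq zero_le)
next
  case False
  with \<open>0 < \<Lambda>\<close> obtain L where "\<Lambda> = ennreal L" "0 < L" by (cases \<Lambda>) auto
  with bound[of L] \<open>0 \<le> a\<close> show ?thesis by (simp add: divide_ennreal)
qed

lemma standing_setting_imp_L2_domain:
  assumes "standing_setting \<nu> \<Omega>"
  shows "L2_domain \<nu> \<Omega>" "0 < measure \<nu> \<Omega>"
proof -
  have sets: "sets \<nu> = sets borel"
    and balls: "\<And>x r. r > 0 \<Longrightarrow> 0 < emeasure \<nu> (ball x r) \<and> emeasure \<nu> (ball x r) < \<infinity>"
    using assms by (auto simp: standing_setting_def doubling_radon_def)
  have "open \<Omega>" "\<Omega> \<noteq> {}" "bounded \<Omega>"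
    using assms by (auto simp: standing_setting_def regular_domain_def)
  have "\<Omega> \<in> sets \<nu>" using sets borel_open[OF \<open>open \<Omega>\<close>] by simp
  obtain x0 where "x0 \<in> \<Omega>" using \<open>\<Omega> \<noteq> {}\<close> by blast
  obtain r where "0 < r" "\<Omega> \<subseteq> ball x0 r" using bounded_subset_ballD[OF \<open>bounded \<Omega>\<close>] by blast
  then have "emeasure \<nu> \<Omega> < \<infinity>"
    using balls[of r x0] emeasure_mono[of \<Omega> "ball x0 r" \<nu>] sets by (simp add: le_less_trans)
  with \<open>\<Omega> \<in> sets \<nu>\<close> \<open>open \<Omega>\<close> show "L2_domain \<nu> \<Omega>" by unfold_locales
  obtain e where "0 < e" "ball x0 e \<subseteq> \<Omega>" using \<open>open \<Omega>\<close> \<open>x0 \<in> \<Omega>\<close> open_contains_ball by blast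
  then have "0 < emeasure \<nu> \<Omega>"
    using balls[of e x0] emeasure_mono[OF _ \<open>\<Omega> \<in> sets \<nu>\<close>] by (meson less_le_trans)
  with \<open>emeasure \<nu> \<Omega> < \<infinity>\<close> show "0 < measure \<nu> \<Omega>" by (simp add: measure_def enn2real_positive_iff)
qed

theorem mainTheorem4:
  fixes \<nu> :: "'a::polish_space measure" and \<Omega> :: "'a set"
    and u0 :: "'a \<Rightarrow> real" and u :: "real \<Rightarrow> 'a \<Rightarrow> real"
  assumes "standing_setting \<nu> \<Omega>"
    and "\<exists>C>0. \<forall>w. memBV \<nu> \<Omega> w \<and> memL2 \<nu> \<Omega> w \<longrightarrow>
           ennreal (l2norm \<nu> \<Omega> (\<lambda>x. w x - mean \<nu> \<Omega> w)) \<le> ennreal C * total_variation \<nu> \<Omega> w"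
    and "memL2 \<nu> \<Omega> u0"
    and "TV_Neumann_solution \<nu> \<Omega> u0 u"
  shows "lambda1_TVN \<nu> \<Omega> > 0 \<and>
         extinction_time \<nu> \<Omega> u0 u \<le> ennreal (l2norm \<nu> \<Omega> u0) / lambda1_TVN \<nu> \<Omega>"
proof -
  interpret TV_flow \<nu> \<Omega> u0 u
    using standing_setting_imp_L2_domain[OF assms(1)] assms(3,4)
    by (simp add: TV_flow_def TV_flow_axioms_def)
  obtain C where "C > 0" and poincare: "\<And>w. memBV \<nu> \<Omega> w \<Longrightarrow> memL2 \<nu> \<Omega> w \<Longrightarrow>
      ennreal (l2norm \<nu> \<Omega> (\<lambda>x. w x - mean \<nu> \<Omega> w)) \<le> ennreal C * total_variation \<nu> \<Omega> w"
    using assms(2) by blast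
  have "0 < ennreal (1 / C)" using \<open>C > 0\<close> by simp
  also have "\<dots> \<le> lambda1_TVN \<nu> \<Omega>" using \<open>C > 0\<close> poincare by (rule lambda1_TVN_ge_inverse)
  finally have "0 < lambda1_TVN \<nu> \<Omega>" .
  moreover have "extinction_time \<nu> \<Omega> u0 u \<le> ennreal (l2norm \<nu> \<Omega> u0) / lambda1_TVN \<nu> \<Omega>"
    using \<open>0 < lambda1_TVN \<nu> \<Omega>\<close> l2norm_nonneg extinction_time_le
    by (rule ennreal_le_divide_of_real_bounds)
  ultimately show ?thesis by simp
qed

end
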